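(* Let $\mathcal{M}$ be a countable Scott set coded by $M=\bigoplus_i X_i$ and let $C, D, E \subseteq \omega^2$. Suppose $\mathcal{U}^{\mathcal{M}}_C$ is $\mathcal{M}$-cohesive, and both $\mathcal{U}^{\mathcal{M}}_C \cap \mathcal{U}^{\mathcal{M}}_D$ and $\mathcal{U}^{\mathcal{M}}_C \cap \mathcal{U}^{\mathcal{M}}_E$ are largeness classes. Then $\mathcal{U}^{\mathcal{M}}_C \cap \mathcal{U}^{\mathcal{M}}_D \cap \mathcal{U}^{\mathcal{M}}_E$ is a largeness class.
   Context: A largeness class is a non-empty $\mathcal{A} \subseteq 2^\omega$ closed upward under $\subseteq$ such that for every finite cover $Y_0\cup\dots\cup Y_{k-1}=\omega$ some $Y_j \in \mathcal{A}$. A Scott set is a collection of sets closed under Turing reducibility and join such that every infinite binary tree in it has a path in it; it is countable coded by $M$ if it equals $\{X_i : i\in\omega\}$ with $M = \bigoplus_i X_i$. Fix an effective enumeration $\mathcal{U}^Z_0,\mathcal{U}^Z_1,\dots$ (uniform in the oracle $Z$) of all $\Sigma^0_1(Z)$ classes which are upward-closed under $\subseteq$. For $C\subseteq\omega^2$, $\mathcal{U}^{\mathcal{M}}_C = \bigcap_{\langle e,i\rangle\in C}\mathcal{U}^{X_i}_e$. For an infinite set $X$, $\mathcal{L}_X$ is the class of all sets having infinite intersection with $X$. A class $\mathcal{A}$ is $\mathcal{M}$-cohesive if for every $X \in \mathcal{M}$, either $\mathcal{A}\subseteq \mathcal{L}_X$ or $\mathcal{A}\subseteq\mathcal{L}_{\omega\setminus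 X}$. *)

theory Defs
  imports Main "HOL-Library.Nat_Bijection" "HOL-Library.Sublist"
begin

datatype recf =
    Zero
  | Succ
  | Proj nat
  | Comp recf "recf list"
  | Prec recf recf
  | Mn recf
  | Orc

inductive eval :: "nat set \<Rightarrow> recf \<Rightarrow> nat list \<Rightarrow> nat \<Rightarrow> bool" for Ora :: "nat set" where
  eval_Zero: "eval Ora Zero xs 0"
| eval_Succ: "eval Ora Succ (x # xs) (Suc x)"
| eval_Proj: "i < length xs \<Longrightarrow> eval Ora (Proj i) xs (xs ! i)"
| eval_Comp: "list_all2 (\<lambda>g y. eval Ora g xs y) gs ys \<Longrightarrow> eval Ora f ys z \<Longrightarrow> eval Ora (Comp f gs) xs z"
| eval_Prec0: "eval Ora f xs y \<Longrightarrow> eval Ora (Prec f g) (0 # xs) y"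
| eval_PrecS: "eval Ora (Prec f g) (n # xs) z \<Longrightarrow> eval Ora g (z # n # xs) y
               \<Longrightarrow> eval Ora (Prec f g) (Suc n # xs) y"
| eval_Mn: "eval Ora f (y # xs) 0 \<Longrightarrow> (\<forall>z<y. \<exists>v. 0 < v \<and> eval Ora f (z # xs) v)
            \<Longrightarrow> eval Ora (Mn f) xs y"
| eval_Orc: "eval Ora Orc (x # xs) (if x \<in> Ora then 1 else 0)"

definition turing_le :: "nat set \<Rightarrow> nat set \<Rightarrow> bool" where
  "turing_le A B \<longleftrightarrow> (\<exists>p. \<forall>x. eval B p [x] (if x \<in> A then 1 else 0))"

definition join :: "nat set \<Rightarrow> nat set \<Rightarrow> nat set" where
  "join A B = {2 * n | n. n \<in> A} \<union> {2 * n + 1 | n. n \<in> B}"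

definition code :: "bool list \<Rightarrow> nat" where
  "code \<sigma> = list_encode (map (\<lambda>b. if b then 1 else 0) \<sigma>)"

definition restr :: "nat set \<Rightarrow> nat \<Rightarrow> bool list" where
  "restr X n = map (\<lambda>i. i \<in> X) [0..<n]"

definition binary_tree :: "nat set \<Rightarrow> bool" where
  "binary_tree T \<longleftrightarrow> T \<subseteq> range code \<and>
     (\<forall>\<sigma> \<tau>. code \<sigma> \<in> T \<longrightarrow> prefix \<tau> \<sigma> \<longrightarrow> code \<tau> \<in> T)"

definition is_path :: "nat set \<Rightarrow> nat set \<Rightarrow> bool" where
  "is_path X T \<longleftrightarrow> (\<forall>n. code (restr X n) \<in> T)"

definition scott_set :: "nat set set \<Rightarrow> bool" where
  "scott_set S \<longleftrightarrow>
     (\<forall>X\<in>S. \<forall>Y. turing_le Y X \<longrightarrow> Y \<in> S) \<and>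
     (\<forall>X\<in>S. \<forall>Y\<in>S. join X Y \<in> S) \<and>
     (\<forall>T\<in>S. binary_tree T \<and> infinite T \<longrightarrow> (\<exists>X\<in>S. is_path X T))"

text \<open>The set coded by a sequence: M = join of all X i.\<close>
definition coded_by :: "(nat \<Rightarrow> nat set) \<Rightarrow> nat set" where
  "coded_by X = {prod_encode (i, n) | i n. n \<in> X i}"

definition upward_closed :: "nat set set \<Rightarrow> bool" where
  "upward_closed A \<longleftrightarrow> (\<forall>X Y. X \<in> A \<longrightarrow> X \<subseteq> Y \<longrightarrow> Y \<in> A)"

definition largeness :: "nat set set \<Rightarrow> bool" where
  "largeness A \<longleftrightarrow> A \<noteq> {} \<and> upward_closed A \<and>
     (\<forall>k (Y :: nat \<Rightarrow> nat set). (\<Union>j<k. Y j) = UNIV \<longrightarrow> (\<exists>j<k. Y j \<in> A))"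

definition ce_in :: "nat set \<Rightarrow> nat set \<Rightarrow> bool" where
  "ce_in Z W \<longleftrightarrow> (\<exists>p. W = {x. \<exists>y. eval Z p [x] y})"

definition sigma01 :: "nat set \<Rightarrow> nat set set \<Rightarrow> bool" where
  "sigma01 Z V \<longleftrightarrow> (\<exists>W. ce_in Z W \<and> V = {X. \<exists>n. code (restr X n) \<in> W})"

definition effective_enum :: "(nat set \<Rightarrow> nat \<Rightarrow> nat set set) \<Rightarrow> bool" where
  "effective_enum U \<longleftrightarrow>
     (\<exists>p. \<forall>Z e. U Z e = {X. \<exists>n y. eval Z p [e, code (restr X n)] y}) \<and>
     (\<forall>Z e. upward_closed (U Z e)) \<and>
     (\<forall>Z V. sigma01 Z V \<and> upward_closed V \<longrightarrow> (\<exists>e. U Z e = V))"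

definition UM :: "(nat set \<Rightarrow> nat \<Rightarrow> nat set set) \<Rightarrow> (nat \<Rightarrow> nat set) \<Rightarrow> (nat \<times> nat) set \<Rightarrow> nat set set" where
  "UM U X C = {A. \<forall>(e, i)\<in>C. A \<in> U (X i) e}"

definition L :: "nat set \<Rightarrow> nat set set" where
  "L Y = {A. infinite (A \<inter> Y)}"

definition M_cohesive :: "nat set set \<Rightarrow> nat set set \<Rightarrow> bool" where
  "M_cohesive S A \<longleftrightarrow> (\<forall>Y\<in>S. A \<subseteq> L Y \<or> A \<subseteq> L (- Y))"

end

theory Submission
  imports Defs
begin

text \<open>Suppose a finite cover Y 0, \<dots>, Y (k - 1) of \<omega> had no part in
  A = U_C \<inter> U_D \<inter> U_E. Then each Y j avoids one of the upward closed Sigma^0_1 classes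
  whose intersection is A. Interleaved, the covers avoiding these classes are the paths through an
  infinite binary tree computable from the join of the finitely many X i involved, so the Scott
  set contains such a path and hence a cover Y' 0, \<dots>, Y' (k - 1) by members of the Scott set
  with the same avoidance property. As U_C \<inter> U_D is large, some Y' j lies in U_C \<inter> U_D. By
  cohesiveness U_C \<subseteq> L (Y' j), so the complement of Y' j is not in U_C, and largeness of
  U_C \<inter> U_E applied to the cover by Y' j and its complement puts Y' j into U_E as well:
  a contradiction.

  Deciding membership in the tree requires running programs with a clock; instead of a
  universal program, each program is compiled into one computing its clocked evaluation.\<close>

definition computes :: "nat set \<Rightarrow> recf \<Rightarrow> nat \<Rightarrow> (nat list \<Rightarrow> nat) \<Rightarrow> bool" where
  "computes Z P n f \<longleftrightarrow> (\<forall>xs. length xs = n \<longrightarrow> eval Z P xs (f xs))"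

lemma computesD: "computes Z P n f \<Longrightarrow> length xs = n \<Longrightarrow> eval Z P xs (f xs)"
  by (simp add: computes_def)

lemma computes_cong:
  "computes Z P n f \<Longrightarrow> (\<And>xs. length xs = n \<Longrightarrow> f xs = g xs) \<Longrightarrow> computes Z P n g"
  by (simp add: computes_def)

lemma computes_cong_arity:
  "computes Z P n f \<Longrightarrow> n = m \<Longrightarrow> (\<And>xs. length xs = m \<Longrightarrow> f xs = g xs) \<Longrightarrow> computes Z P m g"
  by (simp add: computes_def)

lemma computes_Zero: "computes Z Zero n (\<lambda>_. 0)"
  by (simp add: computes_def eval_Zero)

lemma computes_Proj: "i < n \<Longrightarrow> computes Z (Proj i) n (\<lambda>xs. xs ! i)"
  by (simp add: computes_def eval_Proj)

lemma computes_Succ: "0 < n \<Longrightarrow> computes Z Succ n (\<lambda>xs. Suc (hd xs))"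
  unfolding computes_def
proof (intro allI impI)
  fix xs :: "nat list" assume "length xs = n" "0 < n"
  then obtain x ys where "xs = x # ys" by (cases xs) auto
  then show "eval Z Succ xs (Suc (hd xs))" by (simp add: eval_Succ)
qed

lemma computes_Orc: "0 < n \<Longrightarrow> computes Z Orc n (\<lambda>xs. if hd xs \<in> Z then 1 else 0)"
  unfolding computes_def
proof (intro allI impI)
  fix xs :: "nat list" assume "length xs = n" "0 < n"
  then obtain x ys where "xs = x # ys" by (cases xs) auto
  then show "eval Z Orc xs (if hd xs \<in> Z then 1 else 0)" by (simp add: eval_Orc)
qed

lemma computes_Comp:
  assumes "computes Z f (length gs) h" and "list_all2 (\<lambda>g G. computes Z g n G) gs Gs"
  shows "computes Z (Comp f gs) n (\<lambda>xs. h (map (\<lambda>G. G xs) Gs))"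
  unfolding computes_def
proof (intro allI impI)
  fix xs :: "nat list" assume "length xs = n"
  then have "list_all2 (\<lambda>g y. eval Z g xs y) gs (map (\<lambda>G. G xs) Gs)"
    using assms(2) by (auto simp: list_all2_conv_all_nth computes_def)
  moreover have "length (map (\<lambda>G. G xs) Gs) = length gs"
    using assms(2) by (simp add: list_all2_lengthD)
  ultimately show "eval Z (Comp f gs) xs (h (map (\<lambda>G. G xs) Gs))"
    using assms(1) by (auto simp: computes_def intro: eval_Comp)
qed

lemma computes_Comp1:
  "computes Z f 1 h \<Longrightarrow> computes Z g n G \<Longrightarrow> computes Z (Comp f [g]) n (\<lambda>xs. h [G xs])"
  using computes_Comp[of Z f "[g]" h n "[G]"] by simp

lemma computes_Comp2:
  "computes Z f 2 h \<Longrightarrow> computes Z g1 n G1 \<Longrightarrow> computes Z g2 n G2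
   \<Longrightarrow> computes Z (Comp f [g1, g2]) n (\<lambda>xs. h [G1 xs, G2 xs])"
  using computes_Comp[of Z f "[g1, g2]" h n "[G1, G2]"] by (simp add: numeral_2_eq_2)

lemma computes_Comp3:
  "computes Z f 3 h \<Longrightarrow> computes Z g1 n G1 \<Longrightarrow> computes Z g2 n G2 \<Longrightarrow> computes Z g3 n G3
   \<Longrightarrow> computes Z (Comp f [g1, g2, g3]) n (\<lambda>xs. h [G1 xs, G2 xs, G3 xs])"
  using computes_Comp[of Z f "[g1, g2, g3]" h n "[G1, G2, G3]"] by (simp add: numeral_3_eq_3)

lemma computes_Comp_drop:
  assumes g: "computes Z g (length as + m) G"
    and as: "list_all2 (\<lambda>a A. computes Z a (k + m) A) as As"
  shows "computes Z (Comp g (as @ map Proj [k..<k + m])) (k + m)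
           (\<lambda>xs. G (map (\<lambda>A. A xs) As @ drop k xs))"
proof -
  have "list_all2 (\<lambda>a A. computes Z a (k + m) A)
          (as @ map Proj [k..<k + m]) (As @ map (\<lambda>i xs. xs ! i) [k..<k + m])"
    using as by (intro list_all2_appendI) (auto simp: list_all2_conv_all_nth intro!: computes_Proj)
  with g have c: "computes Z (Comp g (as @ map Proj [k..<k + m])) (k + m)
      (\<lambda>xs. G (map (\<lambda>F. F xs) (As @ map (\<lambda>i xs. xs ! i) [k..<k + m])))"
    by (intro computes_Comp) simp_all
  have "length xs = k + m \<Longrightarrow> map (\<lambda>i. xs ! i) [k..<k + m] = drop k xs" for xs :: "nat list"
    by (rule nth_equalityI) auto
  then show ?thesis by (intro computes_cong[OF c]) (simp add: o_def)
qed

lemma computes_Comp_drop0: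
  "computes Z g m G \<Longrightarrow> computes Z (Comp g (map Proj [k..<k + m])) (k + m) (\<lambda>xs. G (drop k xs))"
  using computes_Comp_drop[where as="[]" and As="[]"] by simp

lemma computes_Comp_drop1:
  "computes Z g (Suc m) G \<Longrightarrow> computes Z a (k + m) A
   \<Longrightarrow> computes Z (Comp g (a # map Proj [k..<k + m])) (k + m) (\<lambda>xs. G (A xs # drop k xs))"
  using computes_Comp_drop[where as="[a]" and As="[A]"] by simp

lemma computes_Comp_drop2:
  "computes Z g (Suc (Suc m)) G \<Longrightarrow> computes Z a (k + m) A \<Longrightarrow> computes Z b (k + m) B
   \<Longrightarrow> computes Z (Comp g (a # b # map Proj [k..<k + m])) (k + m) (\<lambda>xs. G (A xs # B xs # drop k xs))"
  using computes_Comp_drop[where as="[a, b]" and As="[A, B]"] by simp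

lemma computes_Comp_drop3:
  "computes Z g (Suc (Suc (Suc m))) G \<Longrightarrow> computes Z a (k + m) A \<Longrightarrow> computes Z b (k + m) B
   \<Longrightarrow> computes Z c (k + m) C
   \<Longrightarrow> computes Z (Comp g (a # b # c # map Proj [k..<k + m])) (k + m)
         (\<lambda>xs. G (A xs # B xs # C xs # drop k xs))"
  using computes_Comp_drop[where as="[a, b, c]" and As="[A, B, C]"] by simp

fun prim_rec :: "(nat list \<Rightarrow> nat) \<Rightarrow> (nat list \<Rightarrow> nat) \<Rightarrow> nat \<Rightarrow> nat list \<Rightarrow> nat" where
  "prim_rec a b 0 ys = a ys"
| "prim_rec a b (Suc m) ys = b (prim_rec a b m ys # m # ys)"

lemma computes_Prec:
  assumes f: "computes Z f n a" and g: "computes Z g (Suc (Suc n)) b"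
  shows "computes Z (Prec f g) (Suc n) (\<lambda>xs. prim_rec a b (hd xs) (tl xs))"
  unfolding computes_def
proof (intro allI impI)
  fix xs :: "nat list" assume "length xs = Suc n"
  then obtain m ys where xs: "xs = m # ys" and ys: "length ys = n" by (cases xs) auto
  have "eval Z (Prec f g) (m # ys) (prim_rec a b m ys)"
    by (induction m) (use f g ys in \<open>auto simp: computes_def intro: eval_Prec0 eval_PrecS\<close>)
  then show "eval Z (Prec f g) xs (prim_rec a b (hd xs) (tl xs))" by (simp add: xs)
qed

lemma computes_Mn:
  assumes F: "computes Z F (Suc n) G" and ex: "\<And>xs. length xs = n \<Longrightarrow> \<exists>y. G (y # xs) = 0"
  shows "computes Z (Mn F) n (\<lambda>xs. LEAST y. G (y # xs) = 0)"
  unfolding computes_def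
proof (intro allI impI)
  fix xs :: "nat list" assume l: "length xs = n"
  let ?y = "LEAST y. G (y # xs) = 0"
  have "G (?y # xs) = 0" using ex[OF l] by (rule LeastI_ex)
  then have "eval Z F (?y # xs) 0" using computesD[OF F, of "?y # xs"] l by simp
  moreover have "\<exists>v. 0 < v \<and> eval Z F (z # xs) v" if "z < ?y" for z
    using not_less_Least[OF that] computesD[OF F, of "z # xs"] l by auto
  ultimately show "eval Z (Mn F) xs ?y" by (blast intro: eval_Mn)
qed

lemma computes_turing_le:
  assumes "computes Z P 1 (\<lambda>xs. if xs ! 0 \<in> A then 1 else 0)"
  shows "turing_le A Z"
proof -
  have "eval Z P [x] (if x \<in> A then 1 else 0)" for x
    using computesD[OF assms, of "[x]"] by simp
  then show ?thesis unfolding turing_le_def by blast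
qed

fun const_rf :: "nat \<Rightarrow> recf" where
  "const_rf 0 = Zero"
| "const_rf (Suc c) = Comp Succ [const_rf c]"

lemma computes_const_rf: "computes Z (const_rf c) n (\<lambda>_. c)"
proof (induction c)
  case (Suc c)
  then show ?case by (auto intro!: computes_cong[OF computes_Comp1[OF computes_Succ]])
qed (simp add: computes_Zero)

definition ADD :: recf where "ADD = Prec (Proj 0) (Comp Succ [Proj 0])"
definition PRED :: recf where "PRED = Prec Zero (Proj 1)"
definition SUB :: recf where "SUB = Comp (Prec (Proj 0) (Comp PRED [Proj 0])) [Proj 1, Proj 0]"
definition MULT :: recf where "MULT = Prec Zero (Comp ADD [Proj 0, Proj 2])"
definition IFZ :: recf where "IFZ = Prec (Proj 0) (Proj 3)"
definition TRI :: recf where "TRI = Prec Zero (Comp Succ [Comp ADD [Proj 0, Proj 1]])"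

lemma computes_ADD: "computes Z ADD 2 (\<lambda>xs. xs ! 0 + xs ! 1)"
proof -
  have c: "computes Z ADD (Suc 1) (\<lambda>xs. prim_rec (\<lambda>ys. ys ! 0) (\<lambda>ys. Suc (ys ! 0)) (hd xs) (tl xs))"
    unfolding ADD_def
    by (intro computes_Prec computes_Proj computes_cong[OF computes_Comp1[OF computes_Succ computes_Proj]])
      auto
  have "prim_rec (\<lambda>ys. ys ! 0) (\<lambda>ys. Suc (ys ! 0)) m ys = m + ys ! 0" for m ys
    by (induction m) auto
  then show ?thesis
    by (intro computes_cong_arity[OF c]) (auto simp: numeral_2_eq_2 length_Suc_conv)
qed

lemma computes_PRED: "computes Z PRED 1 (\<lambda>xs. xs ! 0 - 1)"
proof -
  have c: "computes Z PRED (Suc 0) (\<lambda>xs. prim_rec (\<lambda>_. 0) (\<lambda>ys. ys ! 1) (hd xs) (tl xs))"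
    unfolding PRED_def by (intro computes_Prec computes_Proj computes_Zero) auto
  have "prim_rec (\<lambda>_. 0) (\<lambda>ys. ys ! 1) m ys = m - 1" for m ys
    by (cases m) auto
  then show ?thesis
    by (intro computes_cong_arity[OF c]) (auto simp: length_Suc_conv)
qed

lemma computes_SUB: "computes Z SUB 2 (\<lambda>xs. xs ! 0 - xs ! 1)"
proof -
  have c: "computes Z (Prec (Proj 0) (Comp PRED [Proj 0])) (Suc 1)
      (\<lambda>xs. prim_rec (\<lambda>ys. ys ! 0) (\<lambda>ys. ys ! 0 - 1) (hd xs) (tl xs))"
    by (intro computes_Prec computes_Proj computes_cong[OF computes_Comp1[OF computes_PRED computes_Proj]])
      auto
  have "prim_rec (\<lambda>ys. ys ! 0) (\<lambda>ys. ys ! 0 - 1) m ys = ys ! 0 - m" for m ys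
    by (induction m) auto
  with c have "computes Z (Prec (Proj 0) (Comp PRED [Proj 0])) 2 (\<lambda>xs. xs ! 1 - xs ! 0)"
    by (intro computes_cong_arity[OF c]) (auto simp: numeral_2_eq_2 length_Suc_conv)
  then show ?thesis
    unfolding SUB_def by (rule computes_cong[OF computes_Comp2[OF _ computes_Proj computes_Proj]]) auto
qed

lemma computes_MULT: "computes Z MULT 2 (\<lambda>xs. xs ! 0 * xs ! 1)"
proof -
  have c: "computes Z MULT (Suc 1) (\<lambda>xs. prim_rec (\<lambda>_. 0) (\<lambda>ys. ys ! 0 + ys ! 2) (hd xs) (tl xs))"
    unfolding MULT_def
    by (intro computes_Prec computes_Zero
        computes_cong[OF computes_Comp2[OF computes_ADD computes_Proj computes_Proj]]) auto
  have "prim_rec (\<lambda>_. 0) (\<lambda>ys. ys ! 0 + ys ! 2) m ys = m * ys ! 0" for m ys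
    by (induction m) auto
  then show ?thesis
    by (intro computes_cong_arity[OF c]) (auto simp: numeral_2_eq_2 length_Suc_conv)
qed

lemma computes_IFZ: "computes Z IFZ 3 (\<lambda>xs. if xs ! 0 = 0 then xs ! 1 else xs ! 2)"
proof -
  have c: "computes Z IFZ (Suc 2) (\<lambda>xs. prim_rec (\<lambda>ys. ys ! 0) (\<lambda>ys. ys ! 3) (hd xs) (tl xs))"
    unfolding IFZ_def by (intro computes_Prec computes_Proj) auto
  have "prim_rec (\<lambda>ys. ys ! 0) (\<lambda>ys. ys ! 3) m ys = (if m = 0 then ys ! 0 else ys ! 1)" for m ys
    by (cases m) auto
  then show ?thesis
    by (intro computes_cong_arity[OF c]) (auto simp: numeral_2_eq_2 numeral_3_eq_3 length_Suc_conv)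
qed

lemma computes_TRI: "computes Z TRI 1 (\<lambda>xs. triangle (xs ! 0))"
proof -
  have c: "computes Z TRI (Suc 0)
      (\<lambda>xs. prim_rec (\<lambda>_. 0) (\<lambda>ys. Suc (ys ! 0 + ys ! 1)) (hd xs) (tl xs))"
    unfolding TRI_def
    by (intro computes_Prec computes_Zero computes_cong[OF computes_Comp1[OF computes_Succ
          computes_Comp2[OF computes_ADD computes_Proj computes_Proj]]]) auto
  have "prim_rec (\<lambda>_. 0) (\<lambda>ys. Suc (ys ! 0 + ys ! 1)) m ys = triangle m" for m ys
    by (induction m) auto
  then show ?thesis
    by (intro computes_cong_arity[OF c]) (auto simp: length_Suc_conv)
qed

definition add_rf :: "recf \<Rightarrow> recf \<Rightarrow> recf" where "add_rf a b = Comp ADD [a, b]"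
definition sub_rf :: "recf \<Rightarrow> recf \<Rightarrow> recf" where "sub_rf a b = Comp SUB [a, b]"
definition mult_rf :: "recf \<Rightarrow> recf \<Rightarrow> recf" where "mult_rf a b = Comp MULT [a, b]"
definition ifz_rf :: "recf \<Rightarrow> recf \<Rightarrow> recf \<Rightarrow> recf" where "ifz_rf c a b = Comp IFZ [c, a, b]"
definition suc_rf :: "recf \<Rightarrow> recf" where "suc_rf a = Comp Succ [a]"
definition pred_rf :: "recf \<Rightarrow> recf" where "pred_rf a = Comp PRED [a]"
definition tri_rf :: "recf \<Rightarrow> recf" where "tri_rf a = Comp TRI [a]"

lemma computes_add_rf:
  "computes Z a n A \<Longrightarrow> computes Z b n B \<Longrightarrow> computes Z (add_rf a b) n (\<lambda>xs. A xs + B xs)"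
  unfolding add_rf_def by (rule computes_cong[OF computes_Comp2[OF computes_ADD]]) auto

lemma computes_sub_rf:
  "computes Z a n A \<Longrightarrow> computes Z b n B \<Longrightarrow> computes Z (sub_rf a b) n (\<lambda>xs. A xs - B xs)"
  unfolding sub_rf_def by (rule computes_cong[OF computes_Comp2[OF computes_SUB]]) auto

lemma computes_mult_rf:
  "computes Z a n A \<Longrightarrow> computes Z b n B \<Longrightarrow> computes Z (mult_rf a b) n (\<lambda>xs. A xs * B xs)"
  unfolding mult_rf_def by (rule computes_cong[OF computes_Comp2[OF computes_MULT]]) auto

lemma computes_ifz_rf:
  "computes Z c n C \<Longrightarrow> computes Z a n A \<Longrightarrow> computes Z b n B
   \<Longrightarrow> computes Z (ifz_rf c a b) n (\<lambda>xs. if C xs = 0 then A xs else B xs)"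
  unfolding ifz_rf_def by (rule computes_cong[OF computes_Comp3[OF computes_IFZ]]) auto

lemma computes_suc_rf: "computes Z a n A \<Longrightarrow> computes Z (suc_rf a) n (\<lambda>xs. Suc (A xs))"
  unfolding suc_rf_def by (rule computes_cong[OF computes_Comp1[OF computes_Succ]]) auto

lemma computes_pred_rf: "computes Z a n A \<Longrightarrow> computes Z (pred_rf a) n (\<lambda>xs. A xs - 1)"
  unfolding pred_rf_def by (rule computes_cong[OF computes_Comp1[OF computes_PRED]]) auto

lemma computes_tri_rf: "computes Z a n A \<Longrightarrow> computes Z (tri_rf a) n (\<lambda>xs. triangle (A xs))"
  unfolding tri_rf_def by (rule computes_cong[OF computes_Comp1[OF computes_TRI]]) auto

fun prod_rf :: "recf list \<Rightarrow> recf" where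
  "prod_rf [] = const_rf 1"
| "prod_rf (P # Ps) = mult_rf P (prod_rf Ps)"

lemma computes_prod_rf:
  "list_all2 (\<lambda>P F. computes Z P m F) Ps Fs
   \<Longrightarrow> computes Z (prod_rf Ps) m (\<lambda>xs. prod_list (map (\<lambda>F. F xs) Fs))"
  by (induct Ps Fs rule: list_all2_induct)
    (use computes_const_rf[of Z 1 m] in \<open>simp_all add: computes_mult_rf\<close>)

lemma prod_indicator: "(\<Prod>i<(n::nat). if P i then 1 else 0 :: nat) = (if \<forall>i<n. P i then 1 else 0)"
  by (induction n) (auto simp: less_Suc_eq)

lemma prod_list_indicator:
  "prod_list (map (\<lambda>j. if P j then 1 else 0 :: nat) js) = (if \<forall>j\<in>set js. P j then 1 else 0)"
  by (induction js) auto

section \<open>Decoding pairs and lists\<close>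

definition tri_root :: "nat \<Rightarrow> nat" where
  "tri_root c = (LEAST y. c < triangle (Suc y))"

lemma triangle_ge: "n \<le> triangle n"
  by (induction n) auto

lemma tri_root_bounds: "triangle (tri_root c) \<le> c \<and> c < triangle (Suc (tri_root c))"
proof
  have ex: "\<exists>y. c < triangle (Suc y)"
    using triangle_ge[of c] by (intro exI[of _ c]) simp
  then show "c < triangle (Suc (tri_root c))"
    unfolding tri_root_def by (rule LeastI_ex)
  show "triangle (tri_root c) \<le> c"
  proof (cases "tri_root c")
    case (Suc w)
    then have "w < tri_root c" by simp
    then show ?thesis using Suc not_less_Least unfolding tri_root_def by fastforce
  qed simp
qed

lemma prod_decode_tri_root:
  "prod_decode c = (c - triangle (tri_root c), tri_root c - (c - triangle (tri_root c)))"
proof -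
  have "prod_encode (c - triangle (tri_root c), tri_root c - (c - triangle (tri_root c))) = c"
    using tri_root_bounds[of c] unfolding prod_encode_def by simp
  then show ?thesis by (metis prod_encode_inverse)
qed

definition TRI_ROOT :: recf where
  "TRI_ROOT = Mn (sub_rf (suc_rf (Proj 1)) (tri_rf (suc_rf (Proj 0))))"

lemma computes_TRI_ROOT: "computes Z TRI_ROOT 1 (\<lambda>xs. tri_root (xs ! 0))"
proof -
  have "computes Z TRI_ROOT 1 (\<lambda>xs. LEAST y. Suc ((y # xs) ! 1) - triangle (Suc ((y # xs) ! 0)) = 0)"
    unfolding TRI_ROOT_def
  proof (rule computes_Mn)
    show "computes Z (sub_rf (suc_rf (Proj 1)) (tri_rf (suc_rf (Proj 0)))) (Suc 1)
        (\<lambda>xs. Suc (xs ! 1) - triangle (Suc (xs ! 0)))"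
      by (intro computes_sub_rf computes_suc_rf computes_tri_rf computes_Proj) auto
    show "\<exists>y. Suc ((y # xs) ! 1) - triangle (Suc ((y # xs) ! 0)) = 0" for xs :: "nat list"
      using triangle_ge[of "xs ! 0"] by (intro exI[of _ "xs ! 0"]) simp
  qed
  then show ?thesis
    by (rule computes_cong) (simp add: tri_root_def less_Suc_eq_le)
qed

definition FST_DECODE :: recf where "FST_DECODE = sub_rf (Proj 0) (tri_rf TRI_ROOT)"
definition SND_DECODE :: recf where "SND_DECODE = sub_rf TRI_ROOT FST_DECODE"

lemma computes_FST_DECODE: "computes Z FST_DECODE 1 (\<lambda>xs. fst (prod_decode (xs ! 0)))"
  unfolding FST_DECODE_def
  by (rule computes_cong[OF computes_sub_rf[OF computes_Proj computes_tri_rf[OF computes_TRI_ROOT]]])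
    (simp, subst prod_decode_tri_root, simp)

lemma computes_SND_DECODE: "computes Z SND_DECODE 1 (\<lambda>xs. snd (prod_decode (xs ! 0)))"
  unfolding SND_DECODE_def
  by (rule computes_cong[OF computes_sub_rf[OF computes_TRI_ROOT computes_FST_DECODE]])
    (simp, subst (1 2) prod_decode_tri_root, simp)

text \<open>Operations on natural numbers read as list codes under \<open>list_encode\<close>.\<close>

definition lhd :: "nat \<Rightarrow> nat" where "lhd c = fst (prod_decode (c - 1))"
definition ltl :: "nat \<Rightarrow> nat" where "ltl c = snd (prod_decode (c - 1))"
definition ldrop :: "nat \<Rightarrow> nat \<Rightarrow> nat" where "ldrop i c = (ltl ^^ i) c"
definition lnth :: "nat \<Rightarrow> nat \<Rightarrow> nat" where "lnth c i = lhd (ldrop i c)"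
definition lcons :: "nat \<Rightarrow> nat \<Rightarrow> nat" where "lcons a r = Suc (triangle (a + r) + a)"

text \<open>The length of a code c is at most c, so counting the nonempty suffixes below c suffices.\<close>
definition llen :: "nat \<Rightarrow> nat" where
  "llen c = (\<Sum>i<c. if ldrop i c = 0 then 0 else 1)"

lemma lcons_list_encode: "lcons a (list_encode l) = list_encode (a # l)"
  by (simp add: lcons_def prod_encode_def)

lemma lhd_list_encode: "lhd (list_encode (x # l)) = x"
  by (simp add: lhd_def)

lemma ltl_list_encode: "ltl (list_encode l) = list_encode (tl l)"
proof (cases l)
  case Nil
  have "prod_encode (0, 0) = 0"
    by (simp add: prod_encode_def)
  then have "prod_decode 0 = (0, 0)"
    by (metis prod_encode_inverse)
  then show ?thesis using Nil by (simp add: ltl_def)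
qed (simp add: ltl_def)

lemma ldrop_list_encode: "ldrop i (list_encode l) = list_encode (drop i l)"
proof (induction i arbitrary: l)
  case (Suc i)
  have "ldrop (Suc i) (list_encode l) = ldrop i (ltl (list_encode l))"
    by (simp only: ldrop_def funpow_Suc_right comp_apply)
  then show ?case by (simp add: ltl_list_encode Suc drop_Suc)
qed (simp add: ldrop_def)

lemma lnth_list_encode: "i < length l \<Longrightarrow> lnth (list_encode l) i = l ! i"
  unfolding lnth_def ldrop_list_encode by (simp only: Cons_nth_drop_Suc[symmetric] lhd_list_encode)

lemma length_le_list_encode: "length l \<le> list_encode l"
proof (induction l)
  case (Cons x l)
  then show ?case using le_prod_encode_2[of "list_encode l" x] by simp
qed simp

lemma llen_list_encode: "llen (list_encode l) = length l"
proof -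
  have eq: "(ldrop i (list_encode l) = 0) = (length l \<le> i)" for i
    by (metis ldrop_list_encode list_encode.simps(1) list_encode_eq drop_eq_Nil)
  have "(\<Sum>i<c. if n \<le> i then 0 else (1::nat)) = min n c" for n c
    by (induction c) auto
  then show ?thesis
    unfolding llen_def eq using length_le_list_encode[of l] by simp
qed

definition LHD :: recf where "LHD = Comp FST_DECODE [pred_rf (Proj 0)]"
definition LTL :: recf where "LTL = Comp SND_DECODE [pred_rf (Proj 0)]"
definition LDROP :: recf where "LDROP = Prec (Proj 0) (Comp LTL [Proj 0])"
definition LLEN :: recf where
  "LLEN = Comp (Prec Zero (add_rf (Proj 0) (ifz_rf (Comp LDROP [Proj 1, Proj 2]) Zero (const_rf 1))))
            [Proj 0, Proj 0]"
definition lnth_rf :: "recf \<Rightarrow> recf \<Rightarrow> recf" where "lnth_rf c i = Comp LHD [Comp LDROP [i, c]]"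
definition lcons_rf :: "recf \<Rightarrow> recf \<Rightarrow> recf" where
  "lcons_rf a r = suc_rf (add_rf (tri_rf (add_rf a r)) a)"

lemma computes_LHD: "computes Z LHD 1 (\<lambda>xs. lhd (xs ! 0))"
  unfolding LHD_def lhd_def
  by (rule computes_cong[OF computes_Comp1[OF computes_FST_DECODE computes_pred_rf[OF computes_Proj]]])
    auto

lemma computes_LTL: "computes Z LTL 1 (\<lambda>xs. ltl (xs ! 0))"
  unfolding LTL_def ltl_def
  by (rule computes_cong[OF computes_Comp1[OF computes_SND_DECODE computes_pred_rf[OF computes_Proj]]])
    auto

lemma computes_LDROP: "computes Z LDROP 2 (\<lambda>xs. ldrop (xs ! 0) (xs ! 1))"
proof -
  have c: "computes Z LDROP (Suc 1) (\<lambda>xs. prim_rec (\<lambda>ys. ys ! 0) (\<lambda>ys. ltl (ys ! 0)) (hd xs) (tl xs))"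
    unfolding LDROP_def
    by (intro computes_Prec computes_Proj computes_cong[OF computes_Comp1[OF computes_LTL computes_Proj]])
      auto
  have "prim_rec (\<lambda>ys. ys ! 0) (\<lambda>ys. ltl (ys ! 0)) m ys = ldrop m (ys ! 0)" for m ys
    by (induction m) (auto simp: ldrop_def)
  then show ?thesis
    by (intro computes_cong_arity[OF c]) (auto simp: length_Suc_conv numeral_2_eq_2)
qed

lemma computes_LLEN: "computes Z LLEN 1 (\<lambda>xs. llen (xs ! 0))"
proof -
  let ?step = "\<lambda>ys. ys ! 0 + (if ldrop (ys ! 1) (ys ! 2) = 0 then 0 else 1)"
  let ?P = "Prec Zero (add_rf (Proj 0) (ifz_rf (Comp LDROP [Proj 1, Proj 2]) Zero (const_rf 1)))"
  have c: "computes Z ?P (Suc 1) (\<lambda>xs. prim_rec (\<lambda>_. 0) ?step (hd xs) (tl xs))"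
    by (intro computes_Prec computes_Zero computes_add_rf computes_ifz_rf computes_Proj
        computes_const_rf computes_cong[OF computes_Comp2[OF computes_LDROP]]) (auto intro!: computes_Proj)
  have "prim_rec (\<lambda>_. 0) ?step m ys = (\<Sum>i<m. if ldrop i (ys ! 0) = 0 then 0 else 1)" for m ys
    by (induction m) auto
  then have "computes Z ?P 2 (\<lambda>xs. \<Sum>i<xs ! 0. if ldrop i (xs ! 1) = 0 then 0 else 1)"
    by (intro computes_cong_arity[OF c]) (auto simp: length_Suc_conv numeral_2_eq_2)
  then show ?thesis
    unfolding LLEN_def llen_def
    by (rule computes_cong[OF computes_Comp2[OF _ computes_Proj computes_Proj]]) auto
qed

lemma computes_lnth_rf:
  "computes Z c n C \<Longrightarrow> computes Z i n I \<Longrightarrow> computes Z (lnth_rf c i) n (\<lambda>xs. lnth (C xs) (I xs))"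
  unfolding lnth_rf_def lnth_def
  by (rule computes_cong[OF computes_Comp1[OF computes_LHD computes_Comp2[OF computes_LDROP]]]) auto

lemma computes_lcons_rf:
  "computes Z a n A \<Longrightarrow> computes Z r n R \<Longrightarrow> computes Z (lcons_rf a r) n (\<lambda>xs. lcons (A xs) (R xs))"
  unfolding lcons_rf_def lcons_def by (intro computes_suc_rf computes_add_rf computes_tri_rf)

definition bounded_prod_rf :: "recf \<Rightarrow> nat \<Rightarrow> recf" where
  "bounded_prod_rf g n = Prec (const_rf 1) (mult_rf (Proj 0) (Comp g (map Proj [1..<1 + Suc n])))"

lemma computes_bounded_prod_rf:
  assumes g: "computes Z g (Suc n) G"
  shows "computes Z (bounded_prod_rf g n) (Suc n) (\<lambda>xs. \<Prod>t<hd xs. G (t # tl xs))"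
proof -
  have tail: "computes Z (Comp g (map Proj [1..<1 + Suc n])) (Suc (Suc n)) (\<lambda>xs. G (drop 1 xs))"
    by (rule computes_cong_arity[OF computes_Comp_drop0[OF g, of 1]]) auto
  have c: "computes Z (bounded_prod_rf g n) (Suc n)
      (\<lambda>xs. prim_rec (\<lambda>_. 1) (\<lambda>ys. ys ! 0 * G (drop 1 ys)) (hd xs) (tl xs))"
    unfolding bounded_prod_rf_def
    by (intro computes_Prec computes_const_rf computes_mult_rf computes_Proj tail) simp
  have "prim_rec (\<lambda>_. 1) (\<lambda>ys. ys ! 0 * G (drop 1 ys)) m ys = (\<Prod>t<m. G (t # ys))" for m ys
    by (induction m) simp_all
  then show ?thesis by (intro computes_cong[OF c]) simp
qed

definition tabulate_rf :: "recf \<Rightarrow> nat \<Rightarrow> recf" where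
  "tabulate_rf g n =
     Comp (Prec Zero (lcons_rf (Comp g (sub_rf (pred_rf (Proj 2)) (Proj 1) # map Proj [3..<3 + n])) (Proj 0)))
       (Proj 0 # map Proj [0..<0 + Suc n])"

text \<open>The recursion builds the list from its last entry: after t steps it holds the entries
  m - t, \<dots>, m - 1.\<close>
lemma prim_rec_tabulate:
  assumes "t \<le> m"
  shows "prim_rec (\<lambda>_. 0) (\<lambda>ys. lcons (G ((ys ! 2 - 1 - ys ! 1) # drop 3 ys)) (ys ! 0)) t (m # ys)
     = list_encode (map (\<lambda>x. G (x # ys)) [m - t..<m])"
  using assms
proof (induction t)
  case (Suc t)
  have "[m - Suc t..<m] = (m - Suc t) # [Suc (m - Suc t)..<m]"
    using Suc.prems by (intro upt_conv_Cons) simp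
  moreover have "Suc (m - Suc t) = m - t"
    using Suc.prems by simp
  ultimately have e: "[m - Suc t..<m] = (m - 1 - t) # [m - t..<m]" by simp
  have "prim_rec (\<lambda>_. 0) (\<lambda>ys. lcons (G ((ys ! 2 - 1 - ys ! 1) # drop 3 ys)) (ys ! 0)) (Suc t) (m # ys)
      = lcons (G ((m - 1 - t) # ys)) (list_encode (map (\<lambda>x. G (x # ys)) [m - t..<m]))"
    using Suc by (simp add: numeral_3_eq_3)
  also have "\<dots> = list_encode (map (\<lambda>x. G (x # ys)) [m - Suc t..<m])"
    unfolding e list.map lcons_list_encode ..
  finally show ?case .
qed simp

lemma computes_tabulate_rf:
  assumes g: "computes Z g (Suc n) G"
  shows "computes Z (tabulate_rf g n) (Suc n) (\<lambda>xs. list_encode (map (\<lambda>t. G (t # tl xs)) [0..<hd xs]))"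
proof -
  let ?step = "\<lambda>ys. lcons (G ((ys ! 2 - 1 - ys ! 1) # drop 3 ys)) (ys ! 0)"
  have "computes Z (sub_rf (pred_rf (Proj 2)) (Proj 1)) (3 + n) (\<lambda>ys. ys ! 2 - 1 - ys ! 1)"
    by (intro computes_sub_rf computes_pred_rf computes_Proj) auto
  from computes_Comp_drop1[OF g this]
  have entry: "computes Z (Comp g (sub_rf (pred_rf (Proj 2)) (Proj 1) # map Proj [3..<3 + n]))
      (Suc (Suc (Suc n))) (\<lambda>ys. G ((ys ! 2 - 1 - ys ! 1) # drop 3 ys))"
    by (rule computes_cong_arity) simp_all
  have "computes Z (Prec Zero (lcons_rf (Comp g (sub_rf (pred_rf (Proj 2)) (Proj 1)
        # map Proj [3..<3 + n])) (Proj 0))) (Suc (Suc n)) (\<lambda>xs. prim_rec (\<lambda>_. 0) ?step (hd xs) (tl xs))"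
    by (intro computes_Prec computes_Zero computes_lcons_rf computes_Proj entry) simp
  from computes_Comp_drop1[OF this computes_Proj, of 0]
  have "computes Z (tabulate_rf g n) (Suc n) (\<lambda>xs. prim_rec (\<lambda>_. 0) ?step (hd xs) (hd xs # tl xs))"
    unfolding tabulate_rf_def
  proof (rule computes_cong_arity)
    fix xs :: "nat list" assume "length xs = Suc n"
    then obtain x ys where "xs = x # ys" by (cases xs) auto
    then show "prim_rec (\<lambda>_. 0) ?step (hd (xs ! 0 # drop 0 xs)) (tl (xs ! 0 # drop 0 xs))
        = prim_rec (\<lambda>_. 0) ?step (hd xs) (hd xs # tl xs)"
      by simp
  qed simp_all
  then show ?thesis
    by (rule computes_cong) (simp only: prim_rec_tabulate[OF le_refl] diff_self_eq_0)
qed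

section \<open>Clocked evaluation\<close>

text \<open>Results are shifted by one: 0 means ``no result (yet)'' and Suc y means result y.
  The clock s only bounds the unbounded searches, which is all that is needed for the clocked
  evaluation to be monotone in s and to agree with \<open>eval\<close> in the limit.\<close>

text \<open>Scanning F 0, \<dots>, F (m - 1) for the first value at most 1: the result is 0 if there is none,
  1 if that value is 0 (the search diverges there) and y + 2 if it is the value 1 at y.\<close>
fun clocked_search :: "(nat \<Rightarrow> nat) \<Rightarrow> nat \<Rightarrow> nat" where
  "clocked_search F 0 = 0"
| "clocked_search F (Suc m) =
     (if clocked_search F m \<noteq> 0 then clocked_search F m
      else if F m = 0 then 1 else if F m - 1 = 0 then m + 2 else 0)"

fun clocked_prec :: "(nat \<Rightarrow> nat \<Rightarrow> nat) \<Rightarrow> nat \<Rightarrow> nat \<Rightarrow> nat" where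
  "clocked_prec G i 0 = i"
| "clocked_prec G i (Suc m) = (if clocked_prec G i m = 0 then 0 else G (clocked_prec G i m - 1) m)"

fun clocked_eval :: "(nat \<Rightarrow> bool) \<Rightarrow> recf \<Rightarrow> nat \<Rightarrow> nat list \<Rightarrow> nat" where
  "clocked_eval Q Zero s xs = 1"
| "clocked_eval Q Succ s xs = (case xs of [] \<Rightarrow> 0 | x # _ \<Rightarrow> Suc (Suc x))"
| "clocked_eval Q (Proj i) s xs = (if i < length xs then Suc (xs ! i) else 0)"
| "clocked_eval Q Orc s xs = (case xs of [] \<Rightarrow> 0 | x # _ \<Rightarrow> if Q x then 2 else 1)"
| "clocked_eval Q (Comp f gs) s xs =
     (if 0 \<in> set (map (\<lambda>g. clocked_eval Q g s xs) gs) then 0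
      else clocked_eval Q f s (map (\<lambda>g. clocked_eval Q g s xs - 1) gs))"
| "clocked_eval Q (Prec f g) s xs =
     (case xs of
       [] \<Rightarrow> 0
     | n # ys \<Rightarrow> clocked_prec (\<lambda>r m. clocked_eval Q g s (r # m # ys)) (clocked_eval Q f s ys) n)"
| "clocked_eval Q (Mn f) s xs = clocked_search (\<lambda>y. clocked_eval Q f s (y # xs)) (Suc s) - 1"

lemma clocked_search_eq:
  "clocked_search F m =
     (if \<exists>y<m. F y \<le> 1
      then if F (LEAST y. F y \<le> 1) = 0 then 1 else Suc (Suc (LEAST y. F y \<le> 1))
      else 0)"
proof (induction m)
  case (Suc m)
  show ?case
  proof (cases "\<exists>y<m. F y \<le> 1")
    case True
    then have "\<exists>y<Suc m. F y \<le> 1" using less_SucI by blast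
    with Suc True show ?thesis by simp
  next
    case False
    then have none: "clocked_search F m = 0" using Suc by simp
    show ?thesis
    proof (cases "F m \<le> 1")
      case True
      have "(LEAST y. F y \<le> 1) = m"
        by (rule Least_equality) (use True False in \<open>auto simp: not_le[symmetric]\<close>)
      with True none show ?thesis by auto
    next
      case big: False
      then have "\<not> (\<exists>y<Suc m. F y \<le> 1)" using False less_Suc_eq by auto
      with big none show ?thesis by auto
    qed
  qed
qed simp

lemma clocked_search_eq_Suc_Suc:
  "clocked_search F m = Suc (Suc y) \<longleftrightarrow> y < m \<and> F y = 1 \<and> (\<forall>z<y. 1 < F z)"
proof
  assume found: "clocked_search F m = Suc (Suc y)"
  then have ex: "\<exists>y<m. F y \<le> 1" and nz: "F (LEAST y. F y \<le> 1) \<noteq> 0"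
    and least: "(LEAST y. F y \<le> 1) = y"
    unfolding clocked_search_eq[of F] by (auto split: if_splits)
  from ex obtain y' where "y' < m" "F y' \<le> 1" by blast
  then have "y < m" using Least_le[of "\<lambda>y. F y \<le> 1" y'] least by simp
  moreover have "F y = 1"
    using LeastI[of "\<lambda>y. F y \<le> 1" y'] \<open>F y' \<le> 1\<close> nz least by simp
  moreover have "1 < F z" if "z < y" for z
    using not_less_Least[of z "\<lambda>y. F y \<le> 1"] that least by simp
  ultimately show "y < m \<and> F y = 1 \<and> (\<forall>z<y. 1 < F z)" by blast
next
  assume "y < m \<and> F y = 1 \<and> (\<forall>z<y. 1 < F z)"
  then have "y < m" "F y = 1" and above: "\<And>z. z < y \<Longrightarrow> 1 < F z" by auto
  have "(LEAST y. F y \<le> 1) = y"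
    by (rule Least_equality) (use \<open>F y = 1\<close> above in \<open>auto simp: not_less[symmetric]\<close>)
  with \<open>y < m\<close> \<open>F y = 1\<close> show "clocked_search F m = Suc (Suc y)"
    unfolding clocked_search_eq[of F] by auto
qed

lemma clocked_eval_Mn_eq_Suc:
  "clocked_eval Q (Mn f) s xs = Suc y
   \<longleftrightarrow> y \<le> s \<and> clocked_eval Q f s (y # xs) = 1 \<and> (\<forall>z<y. 1 < clocked_eval Q f s (z # xs))"
proof -
  have "clocked_eval Q (Mn f) s xs = Suc y
      \<longleftrightarrow> clocked_search (\<lambda>y. clocked_eval Q f s (y # xs)) (Suc s) = Suc (Suc y)"
    by auto
  then show ?thesis
    unfolding clocked_search_eq_Suc_Suc by (simp add: less_Suc_eq_le)
qed

lemma clocked_prec_cong: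
  "clocked_prec G i n \<noteq> 0 \<Longrightarrow> (\<And>r m. G r m \<noteq> 0 \<Longrightarrow> G' r m = G r m) \<Longrightarrow> (i \<noteq> 0 \<Longrightarrow> i' = i)
   \<Longrightarrow> clocked_prec G' i' n = clocked_prec G i n"
proof (induction n)
  case (Suc n)
  then have "clocked_prec G i n \<noteq> 0" by (auto split: if_splits)
  with Suc show ?case by auto
qed simp

lemma clocked_eval_mono:
  "clocked_eval Q f s xs \<noteq> 0 \<Longrightarrow> s \<le> s' \<Longrightarrow> clocked_eval Q f s' xs = clocked_eval Q f s xs"
proof (induction f arbitrary: xs)
  case (Comp f gs)
  let ?ys = "map (\<lambda>g. clocked_eval Q g s xs - 1) gs"
  have args: "0 \<notin> set (map (\<lambda>g. clocked_eval Q g s xs) gs)"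
    using Comp.prems by (auto split: if_splits)
  have "clocked_eval Q g s' xs = clocked_eval Q g s xs" if "g \<in> set gs" for g
  proof -
    have "clocked_eval Q g s xs \<noteq> 0" using args that by force
    then show ?thesis using Comp.IH(2)[OF that] Comp.prems(2) by blast
  qed
  then have "map (\<lambda>g. clocked_eval Q g s' xs) gs = map (\<lambda>g. clocked_eval Q g s xs) gs"
    and "map (\<lambda>g. clocked_eval Q g s' xs - 1) gs = ?ys"
    by simp_all
  with args have "clocked_eval Q (Comp f gs) s' xs = clocked_eval Q f s' ?ys"
    by (simp only: clocked_eval.simps if_False)
  also have "\<dots> = clocked_eval Q f s ?ys"
    using Comp.IH(1) Comp.prems args by simp
  also have "\<dots> = clocked_eval Q (Comp f gs) s xs"
    using args by simp
  finally show ?case .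
next
  case (Prec f g)
  then obtain n ys where xs: "xs = n # ys" by (cases xs) auto
  have "clocked_prec (\<lambda>r m. clocked_eval Q g s' (r # m # ys)) (clocked_eval Q f s' ys) n
      = clocked_prec (\<lambda>r m. clocked_eval Q g s (r # m # ys)) (clocked_eval Q f s ys) n"
    by (rule clocked_prec_cong) (use Prec xs in auto)
  then show ?case using xs by simp
next
  case (Mn f)
  then obtain y where y: "clocked_eval Q (Mn f) s xs = Suc y"
    using not0_implies_Suc by blast
  then have "y \<le> s" and at: "clocked_eval Q f s (y # xs) = 1"
    and above: "\<And>z. z < y \<Longrightarrow> 1 < clocked_eval Q f s (z # xs)"
    unfolding clocked_eval_Mn_eq_Suc by auto
  have "clocked_eval Q f s' (z # xs) = clocked_eval Q f s (z # xs)" if "z \<le> y" for z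
  proof -
    have "clocked_eval Q f s (z # xs) \<noteq> 0"
      using at above[of z] that by (cases "z = y") auto
    then show ?thesis using Mn.IH Mn.prems(2) by blast
  qed
  with \<open>y \<le> s\<close> at above Mn.prems(2) have "clocked_eval Q (Mn f) s' xs = Suc y"
    unfolding clocked_eval_Mn_eq_Suc by auto
  with y show ?case by simp
qed auto

lemma clocked_eval_Suc_mono:
  "clocked_eval Q f s xs = Suc y \<Longrightarrow> s \<le> s' \<Longrightarrow> clocked_eval Q f s' xs = Suc y"
  using clocked_eval_mono by (metis nat.distinct(1))

lemma clocked_eval_sound: "clocked_eval Q f s xs = Suc y \<Longrightarrow> eval {x. Q x} f xs y"
proof (induction f arbitrary: xs y)
  case Orc
  then obtain x ys where "xs = x # ys" by (cases xs) auto
  with Orc show ?case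
    using eval_Orc[of "{x. Q x}" x ys] by (auto split: if_splits)
next
  case (Comp f gs)
  let ?ys = "map (\<lambda>g. clocked_eval Q g s xs - 1) gs"
  have args: "0 \<notin> set (map (\<lambda>g. clocked_eval Q g s xs) gs)"
    using Comp.prems by (auto split: if_splits)
  have "list_all2 (\<lambda>g y. eval {x. Q x} g xs y) gs ?ys"
  proof (rule list_all2_all_nthI)
    fix i assume i: "i < length gs"
    then have "clocked_eval Q (gs ! i) s xs = Suc (clocked_eval Q (gs ! i) s xs - 1)"
      using args by (metis Suc_pred' length_map neq0_conv nth_map nth_mem)
    with i show "eval {x. Q x} (gs ! i) xs (?ys ! i)"
      using Comp.IH(2) by simp
  qed simp
  moreover have "clocked_eval Q f s ?ys = Suc y"
    using Comp.prems args by simp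
  ultimately show ?case
    using Comp.IH(1) by (blast intro: eval_Comp)
next
  case (Prec f g)
  then obtain n ys where xs: "xs = n # ys" by (cases xs) auto
  have "clocked_prec (\<lambda>r m. clocked_eval Q g s (r # m # ys)) (clocked_eval Q f s ys) n = Suc y
      \<Longrightarrow> eval {x. Q x} (Prec f g) (n # ys) y" for y
  proof (induction n arbitrary: y)
    case 0
    then show ?case using Prec.IH(1) by (auto intro: eval_Prec0)
  next
    case (Suc n)
    let ?r = "clocked_prec (\<lambda>r m. clocked_eval Q g s (r # m # ys)) (clocked_eval Q f s ys) n"
    have r: "?r = Suc (?r - 1)"
      using Suc.prems by (auto split: if_splits)
    then have "eval {x. Q x} (Prec f g) (n # ys) (?r - 1)"
      using Suc.IH by simp
    moreover have "clocked_eval Q g s ((?r - 1) # n # ys) = Suc y"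
      using Suc.prems r by (auto split: if_splits)
    ultimately show ?case
      using Prec.IH(2) by (auto intro: eval_PrecS)
  qed
  with Prec.prems xs show ?case by simp
next
  case (Mn f)
  then have "y \<le> s" and zero: "clocked_eval Q f s (y # xs) = Suc 0"
    and above: "\<And>z. z < y \<Longrightarrow> 1 < clocked_eval Q f s (z # xs)"
    unfolding clocked_eval_Mn_eq_Suc by auto
  have "\<exists>v. 0 < v \<and> eval {x. Q x} f (z # xs) v" if z: "z < y" for z
  proof -
    obtain v where "clocked_eval Q f s (z # xs) = Suc v" "0 < v"
      using above[OF z] by (cases "clocked_eval Q f s (z # xs)") auto
    then show ?thesis using Mn.IH by blast
  qed
  with Mn.IH[OF zero] show ?case
    by (blast intro: eval_Mn)
qed (auto intro: eval_Zero eval_Proj eval_Succ split: list.splits if_splits)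

lemma ex_common_stage:
  assumes "\<And>z s s'. P z s \<Longrightarrow> s \<le> s' \<Longrightarrow> P z (s' :: nat)" and "\<forall>z<(y::nat). \<exists>s. P z s"
  shows "\<exists>S. \<forall>z<y. P z S"
  using assms(2)
proof (induction y)
  case (Suc y)
  then obtain S s where "\<forall>z<y. P z S" and "P y s" by auto
  then have "\<forall>z<Suc y. P z (max S s)"
    using assms(1) by (metis less_Suc_eq max.cobounded1 max.cobounded2)
  then show ?case by blast
qed simp

lemma clocked_eval_list_stage:
  assumes "list_all2 (\<lambda>g y. \<exists>s. clocked_eval Q g s xs = Suc y) gs ys"
  shows "\<exists>S. \<forall>s\<ge>S. map (\<lambda>g. clocked_eval Q g s xs) gs = map Suc ys"
proof -
  have "\<exists>S. \<forall>i<length gs. clocked_eval Q (gs ! i) S xs = Suc (ys ! i)"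
  proof (rule ex_common_stage)
    show "\<forall>i<length gs. \<exists>s. clocked_eval Q (gs ! i) s xs = Suc (ys ! i)"
      using assms by (simp add: list_all2_conv_all_nth)
  qed (rule clocked_eval_Suc_mono)
  then obtain S where "\<forall>i<length gs. clocked_eval Q (gs ! i) S xs = Suc (ys ! i)" ..
  then have "\<forall>i<length gs. clocked_eval Q (gs ! i) s xs = Suc (ys ! i)" if "S \<le> s" for s
    using clocked_eval_Suc_mono that by blast
  then show ?thesis
    using list_all2_lengthD[OF assms] by (intro exI[of _ S] allI impI nth_equalityI) auto
qed

lemma clocked_eval_Comp_stage:
  assumes "list_all2 (\<lambda>g y. \<exists>s. clocked_eval Q g s xs = Suc y) gs ys"
    and s1: "clocked_eval Q f s1 ys = Suc z"
  shows "\<exists>s. clocked_eval Q (Comp f gs) s xs = Suc z"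
proof -
  obtain s0 where s0: "\<forall>s\<ge>s0. map (\<lambda>g. clocked_eval Q g s xs) gs = map Suc ys"
    using clocked_eval_list_stage[OF assms(1)] by blast
  let ?S = "max s0 s1"
  have args: "map (\<lambda>g. clocked_eval Q g ?S xs) gs = map Suc ys"
    using s0 by simp
  have "map (\<lambda>g. clocked_eval Q g ?S xs - 1) gs = map (\<lambda>r. r - 1) (map (\<lambda>g. clocked_eval Q g ?S xs) gs)"
    by simp
  also have "\<dots> = ys"
    unfolding args by (simp add: map_idI)
  finally have "clocked_eval Q (Comp f gs) ?S xs = clocked_eval Q f ?S ys"
    using args by (simp only: clocked_eval.simps) simp
  also have "\<dots> = Suc z"
    using clocked_eval_Suc_mono[OF s1] by simp
  finally show ?thesis by blast
qed

lemma clocked_eval_complete: "eval {x. Q x} f xs y \<Longrightarrow> \<exists>s. clocked_eval Q f s xs = Suc y"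
proof (induction rule: eval.induct)
  case (eval_Comp xs gs ys f z)
  then have "list_all2 (\<lambda>g y. \<exists>s. clocked_eval Q g s xs = Suc y) gs ys"
    by (simp add: list_all2_mono)
  moreover obtain s1 where "clocked_eval Q f s1 ys = Suc z"
    using eval_Comp by blast
  ultimately show ?case
    by (rule clocked_eval_Comp_stage)
next
  case (eval_PrecS f g n xs z y)
  then obtain s1 s2 where s1: "clocked_eval Q (Prec f g) s1 (n # xs) = Suc z"
    and s2: "clocked_eval Q g s2 (z # n # xs) = Suc y"
    by blast
  let ?S = "max s1 s2"
  have "clocked_prec (\<lambda>r m. clocked_eval Q g ?S (r # m # xs)) (clocked_eval Q f ?S xs) n = Suc z"
    using clocked_eval_Suc_mono[OF s1, of ?S] by simp
  then have "clocked_eval Q (Prec f g) ?S (Suc n # xs) = clocked_eval Q g ?S (z # n # xs)"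
    by simp
  also have "\<dots> = Suc y"
    using clocked_eval_Suc_mono[OF s2] by simp
  finally show ?case by blast
next
  case (eval_Mn f y xs)
  then obtain s0 where s0: "clocked_eval Q f s0 (y # xs) = Suc 0"
    by blast
  have "\<forall>z<y. \<exists>s. \<exists>v>0. clocked_eval Q f s (z # xs) = Suc v"
    using eval_Mn by blast
  then have "\<forall>z<y. \<exists>s. 1 < clocked_eval Q f s (z # xs)"
    by (metis Suc_less_eq One_nat_def)
  moreover have "1 < clocked_eval Q f s' (z # xs)"
    if "1 < clocked_eval Q f s (z # xs)" "s \<le> s'" for z s s'
    using that clocked_eval_mono[of Q f s "z # xs" s'] by simp
  ultimately obtain S where S: "\<forall>z<y. 1 < clocked_eval Q f S (z # xs)"
    using ex_common_stage[of "\<lambda>z s. 1 < clocked_eval Q f s (z # xs)" y] by blast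
  let ?S = "max (max s0 S) y"
  have "S \<le> ?S" by simp
  then have "1 < clocked_eval Q f ?S (z # xs)" if "z < y" for z
    using S[rule_format, OF that] clocked_eval_mono[of Q f S "z # xs" ?S] by simp
  moreover have "clocked_eval Q f ?S (y # xs) = 1"
    using clocked_eval_Suc_mono[OF s0, of ?S] by simp
  ultimately have "clocked_eval Q (Mn f) ?S xs = Suc y"
    unfolding clocked_eval_Mn_eq_Suc by simp
  then show ?case by blast
qed (auto split: list.splits)

definition clocked_prec_rf :: "recf \<Rightarrow> recf \<Rightarrow> nat \<Rightarrow> recf" where
  "clocked_prec_rf a b m =
     Comp (Prec a (ifz_rf (Proj 0) Zero (Comp b (Proj 2 # pred_rf (Proj 0) # Proj 1 # map Proj [3..<3 + m]))))
       (Proj 1 # Proj 0 # map Proj [2..<2 + m])"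

lemma prim_rec_clocked_prec:
  "prim_rec A (\<lambda>ys. if ys ! 0 = 0 then 0 else B (ys ! 2 # (ys ! 0 - 1) # ys ! 1 # drop 3 ys)) m (s # ys)
   = clocked_prec (\<lambda>r t. B (s # r # t # ys)) (A (s # ys)) m"
  by (induction m) (simp_all add: numeral_3_eq_3)

lemma computes_clocked_prec_rf:
  assumes a: "computes Z a (Suc m) A" and b: "computes Z b (Suc (Suc (Suc m))) B"
  shows "computes Z (clocked_prec_rf a b m) (Suc (Suc m))
           (\<lambda>xs. clocked_prec (\<lambda>r t. B (hd xs # r # t # drop 2 xs)) (A (hd xs # drop 2 xs)) (xs ! 1))"
proof -
  let ?step = "\<lambda>ys. if ys ! 0 = 0 then 0 else B (ys ! 2 # (ys ! 0 - 1) # ys ! 1 # drop 3 ys)"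
  have "computes Z (pred_rf (Proj 0)) (3 + m) (\<lambda>ys. ys ! 0 - 1)"
    by (rule computes_pred_rf[OF computes_Proj]) simp
  moreover have "computes Z (Proj 2) (3 + m) (\<lambda>ys. ys ! 2)" "computes Z (Proj 1) (3 + m) (\<lambda>ys. ys ! 1)"
    by (auto intro!: computes_Proj)
  ultimately have args: "computes Z (Proj 2) (3 + m) (\<lambda>ys. ys ! 2)"
    "computes Z (pred_rf (Proj 0)) (3 + m) (\<lambda>ys. ys ! 0 - 1)" "computes Z (Proj 1) (3 + m) (\<lambda>ys. ys ! 1)"
    by blast+
  have "computes Z (Comp b (Proj 2 # pred_rf (Proj 0) # Proj 1 # map Proj [3..<3 + m])) (Suc (Suc (Suc m)))
      (\<lambda>ys. B (ys ! 2 # (ys ! 0 - 1) # ys ! 1 # drop 3 ys))"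
    by (rule computes_cong_arity[OF computes_Comp_drop3[OF b args]]) simp_all
  from computes_ifz_rf[OF computes_Proj computes_Zero this]
  have "computes Z (ifz_rf (Proj 0) Zero (Comp b (Proj 2 # pred_rf (Proj 0) # Proj 1
      # map Proj [3..<3 + m]))) (Suc (Suc (Suc m))) ?step"
    by simp
  then have prec: "computes Z (Prec a (ifz_rf (Proj 0) Zero (Comp b (Proj 2 # pred_rf (Proj 0) # Proj 1
      # map Proj [3..<3 + m])))) (Suc (Suc m)) (\<lambda>zs. prim_rec A ?step (hd zs) (tl zs))"
    by (rule computes_Prec[OF a])
  have "computes Z (Proj 1) (2 + m) (\<lambda>ys. ys ! 1)" "computes Z (Proj 0) (2 + m) (\<lambda>ys. ys ! 0)"
    by (auto intro!: computes_Proj)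
  from computes_Comp_drop2[OF prec this]
  have "computes Z (clocked_prec_rf a b m) (Suc (Suc m))
      (\<lambda>xs. prim_rec A ?step (xs ! 1) (xs ! 0 # drop 2 xs))"
    unfolding clocked_prec_rf_def by (rule computes_cong_arity) simp_all
  then show ?thesis
  proof (rule computes_cong)
    fix xs :: "nat list" assume "length xs = Suc (Suc m)"
    then obtain s n ys where "xs = s # n # ys" by (auto simp: length_Suc_conv)
    then show "prim_rec A ?step (xs ! 1) (xs ! 0 # drop 2 xs)
        = clocked_prec (\<lambda>r t. B (hd xs # r # t # drop 2 xs)) (A (hd xs # drop 2 xs)) (xs ! 1)"
      by (simp add: prim_rec_clocked_prec)
  qed
qed

definition clocked_search_rf :: "recf \<Rightarrow> nat \<Rightarrow> recf" where
  "clocked_search_rf r n =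
     (let R = Comp r (Proj 2 # Proj 1 # map Proj [3..<3 + n])
      in Comp (Prec Zero (ifz_rf (Proj 0)
                (ifz_rf R (const_rf 1) (ifz_rf (pred_rf R) (suc_rf (suc_rf (Proj 1))) Zero)) (Proj 0)))
           (suc_rf (Proj 0) # map Proj [0..<0 + Suc n]))"

lemma prim_rec_clocked_search:
  "prim_rec (\<lambda>_. 0) (\<lambda>ys. if ys ! 0 = 0
        then if G (ys ! 2 # ys ! 1 # drop 3 ys) = 0 then 1
             else if G (ys ! 2 # ys ! 1 # drop 3 ys) - 1 = 0 then Suc (Suc (ys ! 1)) else 0
        else ys ! 0) m (s # ys)
   = clocked_search (\<lambda>y. G (s # y # ys)) m"
  by (induction m) (simp_all add: numeral_3_eq_3)

lemma computes_clocked_search_rf: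
  assumes r: "computes Z r (Suc (Suc n)) G"
  shows "computes Z (clocked_search_rf r n) (Suc n)
           (\<lambda>xs. clocked_search (\<lambda>y. G (hd xs # y # tl xs)) (Suc (hd xs)))"
proof -
  let ?R = "Comp r (Proj 2 # Proj 1 # map Proj [3..<3 + n])"
  let ?G = "\<lambda>ys. G (ys ! 2 # ys ! 1 # drop 3 ys)"
  let ?step = "\<lambda>ys. if ys ! 0 = 0 then if ?G ys = 0 then 1 else if ?G ys - 1 = 0 then Suc (Suc (ys ! 1)) else 0
      else ys ! 0"
  have "computes Z (Proj 2) (3 + n) (\<lambda>ys. ys ! 2)" "computes Z (Proj 1) (3 + n) (\<lambda>ys. ys ! 1)"
    by (auto intro!: computes_Proj)
  from computes_Comp_drop2[OF r this]
  have R: "computes Z ?R (Suc (Suc (Suc n))) ?G"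
    by (rule computes_cong_arity) simp_all
  have "computes Z (Prec Zero (ifz_rf (Proj 0)
        (ifz_rf ?R (const_rf 1) (ifz_rf (pred_rf ?R) (suc_rf (suc_rf (Proj 1))) Zero)) (Proj 0)))
      (Suc (Suc n)) (\<lambda>zs. prim_rec (\<lambda>_. 0) ?step (hd zs) (tl zs))"
    by (intro computes_Prec computes_Zero computes_ifz_rf computes_Proj R computes_const_rf
        computes_pred_rf computes_suc_rf) simp_all
  from computes_Comp_drop1[OF this computes_suc_rf[OF computes_Proj], of 0]
  show ?thesis
    unfolding clocked_search_rf_def Let_def
  proof (rule computes_cong_arity)
    fix xs :: "nat list" assume "length xs = Suc n"
    then obtain s ys where "xs = s # ys" by (cases xs) auto
    then show "prim_rec (\<lambda>_. 0) ?step (hd (Suc (xs ! 0) # drop 0 xs)) (tl (Suc (xs ! 0) # drop 0 xs))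
        = clocked_search (\<lambda>y. G (hd xs # y # tl xs)) (Suc (hd xs))"
      by (simp only: list.sel nth_Cons_0 drop_0 prim_rec_clocked_search)
  qed simp_all
qed

text \<open>The program clocked_rf hp n f takes a clock followed by n arguments. Its oracle J is
  queried through the reduction computed by hp.\<close>
fun clocked_rf :: "recf \<Rightarrow> nat \<Rightarrow> recf \<Rightarrow> recf" where
  "clocked_rf hp n Zero = const_rf 1"
| "clocked_rf hp n Succ = (if n = 0 then Zero else suc_rf (suc_rf (Proj 1)))"
| "clocked_rf hp n (Proj i) = (if i < n then suc_rf (Proj (Suc i)) else Zero)"
| "clocked_rf hp n Orc = (if n = 0 then Zero else suc_rf (Comp Orc [Comp hp [Proj 1]]))"
| "clocked_rf hp n (Comp f gs) =
     ifz_rf (prod_rf (map (clocked_rf hp n) gs)) Zero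
       (Comp (clocked_rf hp (length gs) f) (Proj 0 # map (\<lambda>g. pred_rf (clocked_rf hp n g)) gs))"
| "clocked_rf hp n (Prec f g) =
     (if n = 0 then Zero else clocked_prec_rf (clocked_rf hp (n - 1) f) (clocked_rf hp (Suc n) g) (n - 1))"
| "clocked_rf hp n (Mn f) = pred_rf (clocked_search_rf (clocked_rf hp (Suc n) f) n)"

lemma computes_clocked_rf_Comp:
  assumes f: "computes J (clocked_rf hp (length gs) f) (Suc (length gs))
      (\<lambda>xs. clocked_eval Q f (hd xs) (tl xs))"
    and gs: "\<And>g. g \<in> set gs \<Longrightarrow> computes J (clocked_rf hp n g) (Suc n) (\<lambda>xs. clocked_eval Q g (hd xs) (tl xs))"
  shows "computes J (clocked_rf hp n (Comp f gs)) (Suc n) (\<lambda>xs. clocked_eval Q (Comp f gs) (hd xs) (tl xs))"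
proof -
  let ?args = "\<lambda>xs. map (\<lambda>g. clocked_eval Q g (hd xs) (tl xs)) gs"
  have "list_all2 (\<lambda>P F. computes J P (Suc n) F) (map (clocked_rf hp n) gs)
      (map (\<lambda>g xs. clocked_eval Q g (hd xs) (tl xs)) gs)"
    using gs by (auto simp: list_all2_conv_all_nth)
  from computes_prod_rf[OF this]
  have all: "computes J (prod_rf (map (clocked_rf hp n) gs)) (Suc n) (\<lambda>xs. prod_list (?args xs))"
    by (simp add: o_def)
  have args: "list_all2 (\<lambda>g G. computes J g (Suc n) G) (Proj 0 # map (\<lambda>g. pred_rf (clocked_rf hp n g)) gs)
      ((\<lambda>xs. xs ! 0) # map (\<lambda>g xs. clocked_eval Q g (hd xs) (tl xs) - 1) gs)"
    unfolding list_all2_Cons list_all2_map1 list_all2_map2 list_all2_same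
    by (intro conjI ballI computes_Proj computes_pred_rf gs) auto
  have "computes J (clocked_rf hp (length gs) f)
      (length (Proj 0 # map (\<lambda>g. pred_rf (clocked_rf hp n g)) gs)) (\<lambda>ys. clocked_eval Q f (hd ys) (tl ys))"
    using f by simp
  from computes_Comp[OF this args]
  have "computes J (Comp (clocked_rf hp (length gs) f) (Proj 0 # map (\<lambda>g. pred_rf (clocked_rf hp n g)) gs))
      (Suc n) (\<lambda>xs. clocked_eval Q f (xs ! 0) (map (\<lambda>v. v - 1) (?args xs)))"
    by (rule computes_cong) (simp add: o_def)
  from computes_ifz_rf[OF all computes_Zero this]
  show ?thesis
    unfolding clocked_rf.simps
  proof (rule computes_cong)
    fix xs :: "nat list" assume "length xs = Suc n"
    then have "xs ! 0 = hd xs" by (cases xs) auto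
    then show "(if prod_list (?args xs) = 0 then 0 else clocked_eval Q f (xs ! 0) (map (\<lambda>v. v - 1) (?args xs)))
        = clocked_eval Q (Comp f gs) (hd xs) (tl xs)"
      by (simp add: prod_list_zero_iff o_def)
  qed
qed

lemma computes_clocked_rf_Prec:
  assumes f: "computes J (clocked_rf hp m f) (Suc m) (\<lambda>xs. clocked_eval Q f (hd xs) (tl xs))"
    and g: "computes J (clocked_rf hp (Suc (Suc m)) g) (Suc (Suc (Suc m))) (\<lambda>xs. clocked_eval Q g (hd xs) (tl xs))"
  shows "computes J (clocked_rf hp (Suc m) (Prec f g)) (Suc (Suc m))
           (\<lambda>xs. clocked_eval Q (Prec f g) (hd xs) (tl xs))"
  using computes_clocked_prec_rf[OF f g]
proof (simp only: clocked_rf.simps if_False nat.distinct diff_Suc_1, rule computes_cong)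
  fix xs :: "nat list" assume "length xs = Suc (Suc m)"
  then obtain s n ys where "xs = s # n # ys" by (auto simp: length_Suc_conv)
  then show "clocked_prec (\<lambda>r t. clocked_eval Q g (hd (hd xs # r # t # drop 2 xs)) (tl (hd xs # r # t # drop 2 xs)))
        (clocked_eval Q f (hd (hd xs # drop 2 xs)) (tl (hd xs # drop 2 xs))) (xs ! 1)
      = clocked_eval Q (Prec f g) (hd xs) (tl xs)"
    by simp
qed

lemma computes_clocked_rf_Mn:
  assumes "computes J (clocked_rf hp (Suc n) f) (Suc (Suc n)) (\<lambda>xs. clocked_eval Q f (hd xs) (tl xs))"
  shows "computes J (clocked_rf hp n (Mn f)) (Suc n) (\<lambda>xs. clocked_eval Q (Mn f) (hd xs) (tl xs))"
  unfolding clocked_rf.simps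
  by (rule computes_cong[OF computes_pred_rf[OF computes_clocked_search_rf[OF assms]]]) simp

lemma computes_clocked_rf_Orc:
  assumes hp: "computes J hp 1 (\<lambda>xs. h (xs ! 0))"
  shows "computes J (clocked_rf hp (Suc m) Orc) (Suc (Suc m))
           (\<lambda>xs. clocked_eval (\<lambda>x. h x \<in> J) Orc (hd xs) (tl xs))"
proof -
  have c: "computes J (suc_rf (Comp Orc [Comp hp [Proj 1]])) (Suc (Suc m))
      (\<lambda>xs. Suc (if h (xs ! 1) \<in> J then 1 else 0))"
    by (rule computes_cong[OF computes_suc_rf[OF computes_Comp1[OF computes_Orc computes_Comp1[OF hp
          computes_Proj]]]]) auto
  have eq: "clocked_rf hp (Suc m) Orc = suc_rf (Comp Orc [Comp hp [Proj 1]])"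
    by simp
  show ?thesis
    unfolding eq
  proof (rule computes_cong[OF c])
    fix xs :: "nat list" assume "length xs = Suc (Suc m)"
    then obtain s x ys where "xs = s # x # ys"
      by (auto simp: length_Suc_conv)
    then show "Suc (if h (xs ! 1) \<in> J then 1 else 0) = clocked_eval (\<lambda>x. h x \<in> J) Orc (hd xs) (tl xs)"
      by simp
  qed
qed

lemma computes_clocked_rf:
  assumes hp: "computes J hp 1 (\<lambda>xs. h (xs ! 0))"
  shows "computes J (clocked_rf hp n f) (Suc n) (\<lambda>xs. clocked_eval (\<lambda>x. h x \<in> J) f (hd xs) (tl xs))"
proof (induction f arbitrary: n)
  case Zero
  show ?case unfolding clocked_rf.simps by (rule computes_cong[OF computes_const_rf]) simp
next
  case Succ
  show ?case
    by (cases n) (auto intro!: computes_cong[OF computes_Zero] computes_cong[OF computes_suc_rf[OF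
          computes_suc_rf[OF computes_Proj]]] simp: length_Suc_conv)
next
  case (Proj i)
  show ?case
    by (cases "i < n") (auto intro!: computes_cong[OF computes_Zero] computes_cong[OF computes_suc_rf[OF
          computes_Proj]] simp: length_Suc_conv)
next
  case Orc
  show ?case
  proof (cases n)
    case (Suc m)
    show ?thesis by (simp only: Suc) (rule computes_clocked_rf_Orc[OF hp])
  qed (auto intro!: computes_cong[OF computes_Zero] simp: length_Suc_conv)
next
  case (Comp f gs)
  then show ?case by (intro computes_clocked_rf_Comp) simp_all
next
  case (Prec f g)
  show ?case
  proof (cases n)
    case (Suc m)
    with computes_clocked_rf_Prec[OF Prec.IH(1)[of m] Prec.IH(2)[of "Suc (Suc m)"]]
    show ?thesis by simp
  qed (auto intro!: computes_cong[OF computes_Zero] simp: length_Suc_conv)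
next
  case (Mn f)
  then show ?case by (rule computes_clocked_rf_Mn)
qed

section \<open>The avoidance tree\<close>

definition binary_digit_rf :: recf where
  "binary_digit_rf = ifz_rf (sub_rf (lnth_rf (Proj 1) (Proj 0)) (const_rf 1)) (const_rf 1) Zero"

definition all_binary_rf :: recf where
  "all_binary_rf = Comp (bounded_prod_rf binary_digit_rf 1) [Comp LLEN [Proj 0], Proj 0]"

lemma computes_all_binary_rf:
  "computes Z all_binary_rf 1 (\<lambda>xs. if \<forall>i<llen (xs ! 0). lnth (xs ! 0) i \<le> 1 then 1 else 0)"
proof -
  have g: "computes Z binary_digit_rf (Suc 1) (\<lambda>ys. if lnth (ys ! 1) (ys ! 0) - 1 = 0 then 1 else 0)"
    unfolding binary_digit_rf_def
    by (intro computes_ifz_rf computes_sub_rf computes_lnth_rf computes_Proj computes_const_rf computes_Zero)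
      auto
  have b: "computes Z (bounded_prod_rf binary_digit_rf 1) 2
      (\<lambda>ys. \<Prod>t<hd ys. if lnth (ys ! 1) t - 1 = 0 then 1 else 0)"
    by (rule computes_cong_arity[OF computes_bounded_prod_rf[OF g]])
      (auto simp: numeral_3_eq_3 numeral_2_eq_2 length_Suc_conv One_nat_def cong: if_cong)
  have c: "computes Z all_binary_rf 1 (\<lambda>xs. \<Prod>t<llen (xs ! 0). if lnth (xs ! 0) t - 1 = 0 then 1 else 0)"
    unfolding all_binary_rf_def
    by (rule computes_cong[OF computes_Comp2[OF b computes_Comp1[OF computes_LLEN computes_Proj]
          computes_Proj]]) auto
  show ?thesis by (rule computes_cong[OF c]) (simp add: prod_indicator)
qed

context
  fixes k :: nat
begin

definition zero_entry_rf :: recf where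
  "zero_entry_rf = ifz_rf (lnth_rf (Proj 2) (add_rf (mult_rf (const_rf k) (Proj 1)) (Proj 0))) (const_rf 1) Zero"

definition block_covered_rf :: recf where
  "block_covered_rf =
     ifz_rf (sub_rf (add_rf (mult_rf (const_rf k) (Proj 0)) (const_rf k)) (Comp LLEN [Proj 1]))
       (ifz_rf (Comp (bounded_prod_rf zero_entry_rf 2) [const_rf k, Proj 0, Proj 1]) (const_rf 1) Zero)
       (const_rf 1)"

definition blocks_covered_rf :: recf where
  "blocks_covered_rf = Comp (bounded_prod_rf block_covered_rf 1) [Comp LLEN [Proj 0], Proj 0]"

lemma computes_blocks_covered_rf:
  "computes Z blocks_covered_rf 1 (\<lambda>xs.
     if \<forall>x<llen (xs ! 0). k * x + k \<le> llen (xs ! 0) \<longrightarrow> (\<exists>j<k. lnth (xs ! 0) (k * x + j) \<noteq> 0)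
     then 1 else 0)"
proof -
  let ?block = "\<lambda>c x. if k * x + k - llen c = 0
      then if (\<Prod>j<k. if lnth c (k * x + j) = 0 then 1 else (0::nat)) = 0 then 1 else 0 else (1::nat)"
  have g2: "computes Z zero_entry_rf (Suc 2) (\<lambda>ys. if lnth (ys ! 2) (k * ys ! 1 + ys ! 0) = 0 then 1 else 0)"
    unfolding zero_entry_rf_def
    by (intro computes_ifz_rf computes_lnth_rf computes_add_rf computes_mult_rf computes_Proj
        computes_const_rf computes_Zero) auto
  have b2: "computes Z (bounded_prod_rf zero_entry_rf 2) 3
      (\<lambda>ys. \<Prod>t<ys ! 0. if lnth (ys ! 2) (k * ys ! 1 + t) = 0 then 1 else 0)"
    by (rule computes_cong_arity[OF computes_bounded_prod_rf[OF g2]])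
      (auto simp: numeral_3_eq_3 numeral_2_eq_2 length_Suc_conv One_nat_def cong: if_cong)
  have c3: "computes Z (Comp (bounded_prod_rf zero_entry_rf 2) [const_rf k, Proj 0, Proj 1]) (Suc 1)
      (\<lambda>ys. \<Prod>t<k. if lnth (ys ! 1) (k * ys ! 0 + t) = 0 then 1 else 0)"
    by (rule computes_cong[OF computes_Comp3[OF b2 computes_const_rf computes_Proj computes_Proj]]) auto
  have l1: "computes Z (Comp LLEN [Proj 1]) (Suc 1) (\<lambda>ys. llen (ys ! 1))"
    by (rule computes_cong[OF computes_Comp1[OF computes_LLEN computes_Proj]]) auto
  have g: "computes Z block_covered_rf (Suc 1) (\<lambda>ys. ?block (ys ! 1) (ys ! 0))"
    unfolding block_covered_rf_def
    by (rule computes_cong[OF computes_ifz_rf[OF computes_sub_rf[OF computes_add_rf[OF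
          computes_mult_rf[OF computes_const_rf computes_Proj] computes_const_rf] l1]
          computes_ifz_rf[OF c3 computes_const_rf computes_Zero] computes_const_rf]]) auto
  have b: "computes Z (bounded_prod_rf block_covered_rf 1) 2 (\<lambda>ys. \<Prod>t<hd ys. ?block (ys ! 1) t)"
    by (rule computes_cong_arity[OF computes_bounded_prod_rf[OF g]])
      (auto simp: numeral_3_eq_3 numeral_2_eq_2 length_Suc_conv One_nat_def cong: if_cong)
  have c: "computes Z blocks_covered_rf 1 (\<lambda>xs. \<Prod>t<llen (xs ! 0). ?block (xs ! 0) t)"
    unfolding blocks_covered_rf_def
    by (rule computes_cong[OF computes_Comp2[OF b computes_Comp1[OF computes_LLEN computes_Proj]
          computes_Proj]]) (auto cong: if_cong)
  show ?thesis
  proof (rule computes_cong[OF c])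
    fix xs :: "nat list"
    have eqt: "?block (xs ! 0) t = (if k * t + k \<le> llen (xs ! 0) \<longrightarrow> (\<exists>j<k. lnth (xs ! 0) (k * t + j) \<noteq> 0)
        then 1 else 0)" for t
      by (simp add: prod_indicator)
    show "(\<Prod>t<llen (xs ! 0). ?block (xs ! 0) t)
      = (if \<forall>x<llen (xs ! 0). k * x + k \<le> llen (xs ! 0) \<longrightarrow> (\<exists>j<k. lnth (xs ! 0) (k * x + j) \<noteq> 0)
         then 1 else 0)"
      by (unfold eqt, rule prod_indicator)
  qed
qed

definition column :: "nat \<Rightarrow> nat \<Rightarrow> nat \<Rightarrow> nat" where
  "column c j m = list_encode (map (\<lambda>t. lnth c (k * t + j)) [0..<m])"

definition column_rf :: "nat \<Rightarrow> recf" where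
  "column_rf j = tabulate_rf (lnth_rf (Proj 1) (add_rf (mult_rf (const_rf k) (Proj 0)) (const_rf j))) 1"

lemma computes_column_rf: "computes Z (column_rf j) 2 (\<lambda>ys. column (ys ! 1) j (ys ! 0))"
proof -
  have "computes Z (lnth_rf (Proj 1) (add_rf (mult_rf (const_rf k) (Proj 0)) (const_rf j))) (Suc 1)
      (\<lambda>ys. lnth (ys ! 1) (k * ys ! 0 + j))"
    by (intro computes_lnth_rf computes_add_rf computes_mult_rf computes_Proj computes_const_rf) auto
  from computes_tabulate_rf[OF this] show ?thesis
    unfolding column_rf_def
    by (rule computes_cong_arity) (auto simp: column_def numeral_2_eq_2 length_Suc_conv One_nat_def)
qed

context
  fixes p :: recf and e :: "nat \<Rightarrow> nat" and hp :: "nat \<Rightarrow> recf"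
begin

definition column_avoids_rf :: "nat \<Rightarrow> recf" where
  "column_avoids_rf j =
     ifz_rf (sub_rf (mult_rf (const_rf k) (Proj 0)) (Comp LLEN [Proj 1]))
       (ifz_rf (Comp (clocked_rf (hp j) 2 p) [Comp LLEN [Proj 1], const_rf (e j), column_rf j])
          (const_rf 1) Zero)
       (const_rf 1)"

definition column_never_halts_rf :: "nat \<Rightarrow> recf" where
  "column_never_halts_rf j =
     Comp (bounded_prod_rf (column_avoids_rf j) 1) [suc_rf (Comp LLEN [Proj 0]), Proj 0]"

definition never_halts_rf :: recf where
  "never_halts_rf = prod_rf (map column_never_halts_rf [0..<k])"

lemma computes_column_never_halts_rf:
  assumes hp: "computes J (hp j) 1 (\<lambda>xs. h (xs ! 0))"
  shows "computes J (column_never_halts_rf j) 1 (\<lambda>xs.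
    if \<forall>m<Suc (llen (xs ! 0)). k * m \<le> llen (xs ! 0) \<longrightarrow>
         clocked_eval (\<lambda>x. h x \<in> J) p (llen (xs ! 0)) [e j, column (xs ! 0) j m] = 0
    then 1 else 0)"
proof -
  let ?halts = "\<lambda>c m. clocked_eval (\<lambda>x. h x \<in> J) p (llen c) [e j, column c j m]"
  let ?avoids = "\<lambda>c m. if k * m - llen c = 0 then if ?halts c m = 0 then 1 else 0 else (1::nat)"
  have clocked: "computes J (clocked_rf (hp j) 2 p) 3
      (\<lambda>zs. clocked_eval (\<lambda>x. h x \<in> J) p (zs ! 0) [zs ! 1, zs ! 2])"
    by (rule computes_cong_arity[OF computes_clocked_rf[OF hp]])
      (auto simp: numeral_3_eq_3 numeral_2_eq_2 length_Suc_conv One_nat_def)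
  have l1: "computes J (Comp LLEN [Proj 1]) (Suc 1) (\<lambda>ys. llen (ys ! 1))"
    by (rule computes_cong[OF computes_Comp1[OF computes_LLEN computes_Proj]]) auto
  have col: "computes J (column_rf j) (Suc 1) (\<lambda>ys. column (ys ! 1) j (ys ! 0))"
    by (rule computes_cong_arity[OF computes_column_rf]) auto
  have c3: "computes J (Comp (clocked_rf (hp j) 2 p) [Comp LLEN [Proj 1], const_rf (e j), column_rf j])
      (Suc 1) (\<lambda>ys. ?halts (ys ! 1) (ys ! 0))"
    by (rule computes_cong[OF computes_Comp3[OF clocked l1 computes_const_rf col]]) auto
  have p0: "computes J (Proj 0) (Suc 1) (\<lambda>ys. ys ! 0)"
    by (rule computes_Proj) simp
  have g: "computes J (column_avoids_rf j) (Suc 1) (\<lambda>ys. ?avoids (ys ! 1) (ys ! 0))"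
    unfolding column_avoids_rf_def
    by (rule computes_ifz_rf[OF computes_sub_rf[OF computes_mult_rf[OF computes_const_rf p0] l1]
          computes_ifz_rf[OF c3 computes_const_rf computes_Zero] computes_const_rf])
  have b: "computes J (bounded_prod_rf (column_avoids_rf j) 1) 2 (\<lambda>ys. \<Prod>t<ys ! 0. ?avoids (ys ! 1) t)"
    by (rule computes_cong_arity[OF computes_bounded_prod_rf[OF g]])
      (auto simp: numeral_2_eq_2 length_Suc_conv One_nat_def cong: if_cong)
  have c: "computes J (column_never_halts_rf j) 1 (\<lambda>xs. \<Prod>t<Suc (llen (xs ! 0)). ?avoids (xs ! 0) t)"
    unfolding column_never_halts_rf_def
    by (rule computes_cong[OF computes_Comp2[OF b computes_suc_rf[OF computes_Comp1[OF computes_LLEN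
          computes_Proj]] computes_Proj]]) (auto cong: if_cong)
  show ?thesis
  proof (rule computes_cong[OF c])
    fix xs :: "nat list"
    have "?avoids (xs ! 0) t = (if k * t \<le> llen (xs ! 0) \<longrightarrow> ?halts (xs ! 0) t = 0 then 1 else 0)" for t
      by simp
    then show "(\<Prod>t<Suc (llen (xs ! 0)). ?avoids (xs ! 0) t)
      = (if \<forall>m<Suc (llen (xs ! 0)). k * m \<le> llen (xs ! 0) \<longrightarrow> ?halts (xs ! 0) m = 0 then 1 else 0)"
      by (simp only: prod_indicator)
  qed
qed

lemma computes_never_halts_rf:
  assumes hp: "\<And>j. j < k \<Longrightarrow> computes J (hp j) 1 (\<lambda>xs. h j (xs ! 0))"
  shows "computes J never_halts_rf 1 (\<lambda>xs.
    if \<forall>j<k. \<forall>m<Suc (llen (xs ! 0)). k * m \<le> llen (xs ! 0) \<longrightarrow>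
         clocked_eval (\<lambda>x. h j x \<in> J) p (llen (xs ! 0)) [e j, column (xs ! 0) j m] = 0
    then 1 else 0)"
proof -
  let ?never = "\<lambda>j xs. if \<forall>m<Suc (llen (xs ! 0)). k * m \<le> llen (xs ! 0) \<longrightarrow>
      clocked_eval (\<lambda>x. h j x \<in> J) p (llen (xs ! 0)) [e j, column (xs ! 0) j m] = 0 then 1 else 0"
  have "list_all2 (\<lambda>P F. computes J P 1 F) (map column_never_halts_rf [0..<k]) (map ?never [0..<k])"
    unfolding list_all2_map1 list_all2_map2 list_all2_same
    using computes_column_never_halts_rf[OF hp] by simp
  from computes_prod_rf[OF this] show ?thesis
    unfolding never_halts_rf_def by (rule computes_cong) (simp add: o_def prod_list_indicator)
qed

definition avoid_tree_rf :: recf where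
  "avoid_tree_rf = mult_rf all_binary_rf (mult_rf blocks_covered_rf never_halts_rf)"

text \<open>Its paths are interleaved covers whose parts
  avoid the corresponding classes.\<close>
definition avoid_tree :: "(nat \<Rightarrow> nat \<Rightarrow> bool) \<Rightarrow> nat set" where
  "avoid_tree Q = {c. (\<forall>i<llen c. lnth c i \<le> 1) \<and>
     (\<forall>x<llen c. k * x + k \<le> llen c \<longrightarrow> (\<exists>j<k. lnth c (k * x + j) \<noteq> 0)) \<and>
     (\<forall>j<k. \<forall>m<Suc (llen c). k * m \<le> llen c \<longrightarrow> clocked_eval (Q j) p (llen c) [e j, column c j m] = 0)}"

lemma computes_avoid_tree_rf:
  assumes hp: "\<And>j. j < k \<Longrightarrow> computes J (hp j) 1 (\<lambda>xs. h j (xs ! 0))"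
  shows "computes J avoid_tree_rf 1 (\<lambda>xs. if xs ! 0 \<in> avoid_tree (\<lambda>j x. h j x \<in> J) then 1 else 0)"
proof -
  have m: "(if A then 1 else 0) * ((if B then 1 else 0) * (if C then 1 else 0))
      = (if A \<and> B \<and> C then 1 else (0::nat))" for A B C
    by simp
  have t: "c \<in> avoid_tree Q \<longleftrightarrow> (\<forall>i<llen c. lnth c i \<le> 1) \<and>
      (\<forall>x<llen c. k * x + k \<le> llen c \<longrightarrow> (\<exists>j<k. lnth c (k * x + j) \<noteq> 0)) \<and>
      (\<forall>j<k. \<forall>m<Suc (llen c). k * m \<le> llen c \<longrightarrow>
         clocked_eval (Q j) p (llen c) [e j, column c j m] = 0)" for c Q
    unfolding avoid_tree_def by simp
  show ?thesis
    unfolding avoid_tree_rf_def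
    by (rule computes_cong[OF computes_mult_rf[OF computes_all_binary_rf
          computes_mult_rf[OF computes_blocks_covered_rf computes_never_halts_rf[OF hp]]]])
      (assumption, unfold m t, rule refl)
qed

end

end

section \<open>Paths through the avoidance tree\<close>

lemma code_alt: "code \<sigma> = list_encode (map of_bool \<sigma>)"
  unfolding code_def by (auto intro!: arg_cong[where f = list_encode] map_cong)

lemma llen_code: "llen (code \<sigma>) = length \<sigma>"
  by (simp add: code_alt llen_list_encode)

lemma lnth_code: "i < length \<sigma> \<Longrightarrow> lnth (code \<sigma>) i = of_bool (\<sigma> ! i)"
  by (simp add: code_alt lnth_list_encode)

lemma length_restr [simp]: "length (restr P n) = n"
  by (simp add: restr_def)

lemma nth_restr [simp]: "i < n \<Longrightarrow> restr P n ! i = (i \<in> P)"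
  by (simp add: restr_def)

lemma mult_add_less: "j < k \<Longrightarrow> t < m \<Longrightarrow> k * t + j < k * (m::nat)"
proof -
  assume "j < k" "t < m"
  then have "k * t + j < k * Suc t" by simp
  also have "\<dots> \<le> k * m" using \<open>t < m\<close> by (intro mult_le_mono2) simp
  finally show ?thesis .
qed

lemma mult_add_inj: "j < k \<Longrightarrow> j' < k \<Longrightarrow> k * x + j = k * x' + (j'::nat) \<Longrightarrow> x = x' \<and> j = j'"
proof -
  assume "j < k" "j' < k" and eq: "k * x + j = k * x' + j'"
  from \<open>j < k\<close> \<open>j' < k\<close> have "(k * x + j) div k = x" "(k * x + j) mod k = j"
    "(k * x' + j') div k = x'" "(k * x' + j') mod k = j'"
    by auto
  then show ?thesis using eq by metis
qed

lemma le_mult_add: "0 < k \<Longrightarrow> x < k * x + (k::nat)"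
  by (cases k) auto

lemma column_code:
  assumes "j < k" and "k * m \<le> length \<sigma>"
  shows "column k (code \<sigma>) j m = code (map (\<lambda>t. \<sigma> ! (k * t + j)) [0..<m])"
proof -
  have "lnth (code \<sigma>) (k * t + j) = of_bool (\<sigma> ! (k * t + j))" if "t < m" for t
    using mult_add_less[OF assms(1) that] assms(2) by (simp add: lnth_code)
  then show ?thesis
    unfolding column_def code_alt[of "map _ _"] by (auto intro!: arg_cong[where f = list_encode])
qed

lemma map_restr_column:
  assumes "j < k" and "k * m \<le> n"
  shows "map (\<lambda>t. restr P n ! (k * t + j)) [0..<m] = restr {x. k * x + j \<in> P} m"
proof -
  have "restr P n ! (k * t + j) = (k * t + j \<in> P)" if "t < m" for t
    using mult_add_less[OF assms(1) that] assms(2) by simp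
  then show ?thesis
    unfolding restr_def[of "{x. k * x + j \<in> P}"] by simp
qed

lemma code_mem_avoid_tree:
  assumes k: "0 < k"
  shows "code \<sigma> \<in> avoid_tree k p e Q \<longleftrightarrow>
    (\<forall>x. k * x + k \<le> length \<sigma> \<longrightarrow> (\<exists>j<k. \<sigma> ! (k * x + j))) \<and>
    (\<forall>j<k. \<forall>m. k * m \<le> length \<sigma> \<longrightarrow>
       clocked_eval (Q j) p (length \<sigma>) [e j, code (map (\<lambda>t. \<sigma> ! (k * t + j)) [0..<m])] = 0)"
    (is "_ \<longleftrightarrow> ?blocks \<and> ?columns")
proof -
  have digit: "lnth (code \<sigma>) (k * x + j) \<noteq> 0 \<longleftrightarrow> \<sigma> ! (k * x + j)"
    if "j < k" "k * x + k \<le> length \<sigma>" for x j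
    using that by (simp add: lnth_code)
  have "(\<forall>x<length \<sigma>. k * x + k \<le> length \<sigma> \<longrightarrow> (\<exists>j<k. lnth (code \<sigma>) (k * x + j) \<noteq> 0)) \<longleftrightarrow> ?blocks"
  proof
    assume blocks: "\<forall>x<length \<sigma>. k * x + k \<le> length \<sigma> \<longrightarrow> (\<exists>j<k. lnth (code \<sigma>) (k * x + j) \<noteq> 0)"
    show ?blocks
    proof (intro allI impI)
      fix x assume x: "k * x + k \<le> length \<sigma>"
      with le_mult_add[OF k, of x] have "x < length \<sigma>" by linarith
      with blocks x digit[OF _ x] show "\<exists>j<k. \<sigma> ! (k * x + j)" by blast
    qed
  qed (use digit in blast)
  moreover have "(\<forall>j<k. \<forall>m<Suc (length \<sigma>). k * m \<le> length \<sigma> \<longrightarrow>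
      clocked_eval (Q j) p (length \<sigma>) [e j, column k (code \<sigma>) j m] = 0) \<longleftrightarrow> ?columns"
  proof
    assume columns: "\<forall>j<k. \<forall>m<Suc (length \<sigma>). k * m \<le> length \<sigma> \<longrightarrow>
      clocked_eval (Q j) p (length \<sigma>) [e j, column k (code \<sigma>) j m] = 0"
    show ?columns
    proof (intro allI impI)
      fix j m assume j: "j < k" and m: "k * m \<le> length \<sigma>"
      have "m \<le> k * m" using k by (cases k) auto
      with m have "m < Suc (length \<sigma>)" by linarith
      with columns j m show "clocked_eval (Q j) p (length \<sigma>) [e j, code (map (\<lambda>t. \<sigma> ! (k * t + j)) [0..<m])] = 0"
        by (simp add: column_code)
    qed
  qed (auto simp: column_code)
  moreover have "\<forall>i<length \<sigma>. lnth (code \<sigma>) i \<le> 1"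
    by (simp add: lnth_code)
  ultimately show ?thesis
    unfolding avoid_tree_def mem_Collect_eq llen_code by blast
qed

lemma avoid_tree_subset_range_code: "avoid_tree k p e Q \<subseteq> range code"
proof
  fix c assume "c \<in> avoid_tree k p e Q"
  then have digits: "\<forall>i<llen c. lnth c i \<le> 1"
    unfolding avoid_tree_def by blast
  let ?l = "list_decode c"
  have c: "c = list_encode ?l" by simp
  have "?l ! i \<le> 1" if "i < length ?l" for i
    using digits that c by (metis llen_list_encode lnth_list_encode)
  then have "map of_bool (map (\<lambda>n. n = 1) ?l) = ?l"
    by (intro nth_equalityI) (auto simp: le_Suc_eq)
  then have "code (map (\<lambda>n. n = 1) ?l) = c"
    by (simp add: code_alt)
  then show "c \<in> range code" by (metis rangeI)
qed

lemma avoid_tree_prefix_closed: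
  assumes k: "0 < k" and \<sigma>: "code \<sigma> \<in> avoid_tree k p e Q" and "prefix \<tau> \<sigma>"
  shows "code \<tau> \<in> avoid_tree k p e Q"
proof -
  have len: "length \<tau> \<le> length \<sigma>" and agree: "\<And>i. i < length \<tau> \<Longrightarrow> \<tau> ! i = \<sigma> ! i"
    using \<open>prefix \<tau> \<sigma>\<close> by (auto simp: prefix_def nth_append)
  from \<sigma> have blocks: "\<And>x. k * x + k \<le> length \<sigma> \<Longrightarrow> \<exists>j<k. \<sigma> ! (k * x + j)"
    and columns: "\<And>j m. j < k \<Longrightarrow> k * m \<le> length \<sigma> \<Longrightarrow>
      clocked_eval (Q j) p (length \<sigma>) [e j, code (map (\<lambda>t. \<sigma> ! (k * t + j)) [0..<m])] = 0"
    unfolding code_mem_avoid_tree[OF k] by blast+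
  have "\<exists>j<k. \<tau> ! (k * x + j)" if x: "k * x + k \<le> length \<tau>" for x
  proof -
    have "k * x + k \<le> length \<sigma>" using x len by linarith
    then obtain j where "j < k" "\<sigma> ! (k * x + j)"
      using blocks by blast
    with x agree[of "k * x + j"] show ?thesis by auto
  qed
  moreover have "clocked_eval (Q j) p (length \<tau>) [e j, code (map (\<lambda>t. \<tau> ! (k * t + j)) [0..<m])] = 0"
    if j: "j < k" and m: "k * m \<le> length \<tau>" for j m
  proof (rule ccontr)
    assume halts: "clocked_eval (Q j) p (length \<tau>) [e j, code (map (\<lambda>t. \<tau> ! (k * t + j)) [0..<m])] \<noteq> 0"
    have "k * t + j < length \<tau>" if "t < m" for t
      using mult_add_less[OF j that] m by linarith
    then have same_column: "map (\<lambda>t. \<tau> ! (k * t + j)) [0..<m] = map (\<lambda>t. \<sigma> ! (k * t + j)) [0..<m]"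
      by (simp add: agree)
    have "k * m \<le> length \<sigma>" using m len by linarith
    with columns[OF j] clocked_eval_mono[OF halts len] halts show False
      unfolding same_column by simp
  qed
  ultimately show ?thesis
    unfolding code_mem_avoid_tree[OF k] by blast
qed

lemma binary_tree_avoid_tree: "0 < k \<Longrightarrow> binary_tree (avoid_tree k p e Q)"
  unfolding binary_tree_def using avoid_tree_subset_range_code avoid_tree_prefix_closed by blast

lemma restr_interleave_mem_avoid_tree:
  assumes k: "0 < k" and cover: "(\<Union>j<k. Y j) = UNIV"
    and avoid: "\<And>j n y. j < k \<Longrightarrow> \<not> eval {x. Q j x} p [e j, code (restr (Y j) n)] y"
  shows "code (restr {k * x + j | x j. j < k \<and> x \<in> Y j} n) \<in> avoid_tree k p e Q"
proof -
  let ?P = "{k * x + j | x j. j < k \<and> x \<in> Y j}"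
  have column: "{x. k * x + j \<in> ?P} = Y j" if j: "j < k" for j
  proof (intro set_eqI iffI)
    fix x assume "x \<in> {x. k * x + j \<in> ?P}"
    then obtain x' j' where "k * x + j = k * x' + j'" "j' < k" "x' \<in> Y j'" by blast
    with mult_add_inj[OF j] show "x \<in> Y j" by metis
  qed (use j in blast)
  have "\<exists>j<k. restr ?P n ! (k * x + j)" if x: "k * x + k \<le> n" for x
  proof -
    obtain j where "j < k" "x \<in> Y j" using cover by blast
    then have "k * x + j \<in> ?P" "k * x + j < n" using x by auto
    then have "restr ?P n ! (k * x + j)"
      by (simp only: nth_restr)
    with \<open>j < k\<close> show ?thesis by blast
  qed
  moreover have "clocked_eval (Q j) p n [e j, code (map (\<lambda>t. restr ?P n ! (k * t + j)) [0..<m])] = 0"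
    if "j < k" "k * m \<le> n" for j m
    using avoid[OF \<open>j < k\<close>] clocked_eval_sound not0_implies_Suc
    unfolding map_restr_column[OF that] column[OF \<open>j < k\<close>] by blast
  ultimately show ?thesis
    unfolding code_mem_avoid_tree[OF k] by simp
qed

lemma infinite_avoid_tree:
  assumes "0 < k" and "(\<Union>j<k. Y j) = UNIV"
    and "\<And>j n y. j < k \<Longrightarrow> \<not> eval {x. Q j x} p [e j, code (restr (Y j) n)] y"
  shows "infinite (avoid_tree k p e Q)"
proof -
  let ?c = "\<lambda>n. code (restr {k * x + j | x j. j < k \<and> x \<in> Y j} n)"
  have "inj ?c"
  proof (rule injI)
    fix n n' assume "?c n = ?c n'"
    then have "llen (?c n) = llen (?c n')" by simp
    then show "n = n'" by (simp add: llen_code)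
  qed
  then have "infinite (range ?c)"
    using finite_imageD infinite_UNIV_nat by blast
  moreover have "range ?c \<subseteq> avoid_tree k p e Q"
    using restr_interleave_mem_avoid_tree[OF assms] by blast
  ultimately show ?thesis
    using infinite_super by blast
qed

lemma path_avoid_tree_cover:
  assumes k: "0 < k" and path: "is_path P (avoid_tree k p e Q)"
  shows "(\<Union>j<k. {x. k * x + j \<in> P}) = UNIV"
proof -
  have "\<exists>j<k. k * x + j \<in> P" for x
  proof -
    have "code (restr P (k * x + k)) \<in> avoid_tree k p e Q"
      using path unfolding is_path_def ..
    then obtain j where "j < k" "restr P (k * x + k) ! (k * x + j)"
      unfolding code_mem_avoid_tree[OF k] by auto
    then show ?thesis by auto
  qed
  then show ?thesis by blast
qed

lemma path_avoid_tree_avoids: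
  assumes k: "0 < k" and path: "is_path P (avoid_tree k p e Q)" and j: "j < k"
  shows "\<not> eval {x. Q j x} p [e j, code (restr {x. k * x + j \<in> P} n)] y"
proof
  assume "eval {x. Q j x} p [e j, code (restr {x. k * x + j \<in> P} n)] y"
  then obtain s where s: "clocked_eval (Q j) p s [e j, code (restr {x. k * x + j \<in> P} n)] = Suc y"
    using clocked_eval_complete by blast
  let ?N = "k * n + s"
  have "code (restr P ?N) \<in> avoid_tree k p e Q"
    using path unfolding is_path_def ..
  then have "clocked_eval (Q j) p ?N [e j, code (map (\<lambda>t. restr P ?N ! (k * t + j)) [0..<n])] = 0"
    using j unfolding code_mem_avoid_tree[OF k] by simp
  then show False
    using clocked_eval_Suc_mono[OF s, of ?N] map_restr_column[OF j, of n ?N P] by simp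
qed

fun join_index :: "nat \<Rightarrow> nat \<Rightarrow> nat" where
  "join_index 0 x = 2 * x"
| "join_index (Suc j) x = Suc (2 * join_index j x)"

fun join_list :: "nat set \<Rightarrow> nat set list \<Rightarrow> nat set" where
  "join_list d [] = d"
| "join_list d (A # As) = join A (join_list d As)"

lemma double_mem_join: "2 * n \<in> join A B \<longleftrightarrow> n \<in> A"
  unfolding join_def by (auto simp: Suc_double_not_eq_double double_not_eq_Suc_double)

lemma Suc_double_mem_join: "Suc (2 * n) \<in> join A B \<longleftrightarrow> n \<in> B"
  unfolding join_def by (auto simp: Suc_double_not_eq_double double_not_eq_Suc_double)

lemma mem_join_list: "j < length As \<Longrightarrow> join_index j x \<in> join_list d As \<longleftrightarrow> x \<in> As ! j"
proof (induction As arbitrary: j)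
  case (Cons A As)
  then show ?case
    by (cases j) (simp_all add: double_mem_join Suc_double_mem_join)
qed simp

fun join_index_rf :: "nat \<Rightarrow> recf" where
  "join_index_rf 0 = add_rf (Proj 0) (Proj 0)"
| "join_index_rf (Suc j) = suc_rf (add_rf (join_index_rf j) (join_index_rf j))"

lemma computes_join_index_rf: "computes Z (join_index_rf j) 1 (\<lambda>xs. join_index j (xs ! 0))"
proof (induction j)
  case 0
  show ?case
    unfolding join_index_rf.simps
    by (rule computes_cong[OF computes_add_rf[OF computes_Proj computes_Proj]]) auto
next
  case (Suc j)
  show ?case
    unfolding join_index_rf.simps
    by (rule computes_cong[OF computes_suc_rf[OF computes_add_rf[OF Suc Suc]]]) auto
qed

lemma join_list_in_scott_set: "scott_set S \<Longrightarrow> set As \<subseteq> S \<Longrightarrow> d \<in> S \<Longrightarrow> join_list d As \<in> S"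
  by (induction As) (auto simp: scott_set_def)

lemma scott_set_computable:
  "scott_set S \<Longrightarrow> Z \<in> S \<Longrightarrow> computes Z P 1 (\<lambda>xs. if xs ! 0 \<in> A then 1 else 0) \<Longrightarrow> A \<in> S"
  unfolding scott_set_def using computes_turing_le by blast

lemma column_set_in_scott_set: "scott_set S \<Longrightarrow> P \<in> S \<Longrightarrow> {x. k * x + j \<in> P} \<in> S"
  by (erule scott_set_computable, assumption,
      rule computes_cong[OF computes_Comp1[OF computes_Orc
        computes_add_rf[OF computes_mult_rf[OF computes_const_rf computes_Proj] computes_const_rf]]]) auto

lemma avoid_tree_cong: "(\<And>j. j < k \<Longrightarrow> Q j = Q' j) \<Longrightarrow> avoid_tree k p e Q = avoid_tree k p e Q'"
  unfolding avoid_tree_def by simp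

lemma avoid_tree_in_scott_set:
  assumes sc: "scott_set S" and "d \<in> S" and Z: "\<And>j. j < k \<Longrightarrow> Z j \<in> S"
  shows "avoid_tree k p e (\<lambda>j x. x \<in> Z j) \<in> S"
proof -
  define J where "J = join_list d (map Z [0..<k])"
  have "J \<in> S"
    unfolding J_def using Z \<open>d \<in> S\<close> by (intro join_list_in_scott_set[OF sc]) auto
  have "computes J (avoid_tree_rf k p e join_index_rf) 1
      (\<lambda>xs. if xs ! 0 \<in> avoid_tree k p e (\<lambda>j x. join_index j x \<in> J) then 1 else 0)"
    by (rule computes_avoid_tree_rf) (rule computes_join_index_rf)
  from scott_set_computable[OF sc \<open>J \<in> S\<close> this]
  have "avoid_tree k p e (\<lambda>j x. join_index j x \<in> J) \<in> S" .
  moreover have "avoid_tree k p e (\<lambda>j x. join_index j x \<in> J) = avoid_tree k p e (\<lambda>j x. x \<in> Z j)"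
    unfolding J_def by (rule avoid_tree_cong) (simp add: mem_join_list fun_eq_iff)
  ultimately show ?thesis by simp
qed

section \<open>Covers avoiding upward closed classes\<close>

text \<open>The new cover consists of the columns of a path through the avoidance tree; the tree is
  computable in a join of members of the Scott set, so the path can be taken from it.\<close>
lemma scott_set_cover_avoiding:
  fixes k :: nat and Y :: "nat \<Rightarrow> nat set"
  assumes ee: "effective_enum U" and sc: "scott_set (range X)" and k: "0 < k"
    and cover: "(\<Union>j<k. Y j) = UNIV" and avoid: "\<And>j. j < k \<Longrightarrow> Y j \<notin> U (X (ix j)) (e j)"
  shows "\<exists>Y'. (\<forall>j<k. Y' j \<in> range X \<and> Y' j \<notin> U (X (ix j)) (e j)) \<and> (\<Union>j<k. Y' j) = UNIV"
proof -
  have "\<exists>p. \<forall>Z e. U Z e = {Y. \<exists>n y. eval Z p [e, code (restr Y n)] y}"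
    using ee unfolding effective_enum_def by (rule conjunct1)
  then obtain p where U: "\<And>Z e. U Z e = {Y. \<exists>n y. eval Z p [e, code (restr Y n)] y}"
    by blast
  let ?T = "avoid_tree k p e (\<lambda>j x. x \<in> X (ix j))"
  have "?T \<in> range X"
    by (rule avoid_tree_in_scott_set[OF sc, of "X (ix 0)"]) auto
  moreover have "binary_tree ?T"
    using k by (rule binary_tree_avoid_tree)
  moreover have "infinite ?T"
  proof (rule infinite_avoid_tree[OF k cover])
    show "\<not> eval {x. x \<in> X (ix j)} p [e j, code (restr (Y j) n)] y" if "j < k" for j n y
      using avoid[OF that] unfolding U by simp
  qed
  ultimately obtain P where "P \<in> range X" and path: "is_path P ?T"
    using sc unfolding scott_set_def by blast
  have "{x. k * x + j \<in> P} \<in> range X" for j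
    using sc \<open>P \<in> range X\<close> by (rule column_set_in_scott_set)
  moreover have "{x. k * x + j \<in> P} \<notin> U (X (ix j)) (e j)" if "j < k" for j
    using path_avoid_tree_avoids[OF k path that] unfolding U by simp
  moreover have "(\<Union>j<k. {x. k * x + j \<in> P}) = UNIV"
    using k path by (rule path_avoid_tree_cover)
  ultimately show ?thesis
    by (intro exI[of _ "\<lambda>j. {x. k * x + j \<in> P}"]) blast
qed

lemma upward_closed_UM:
  assumes "effective_enum U"
  shows "upward_closed (UM U X F)"
proof -
  have "upward_closed (U Z e)" for Z e
    using assms unfolding effective_enum_def by blast
  then show ?thesis
    unfolding upward_closed_def UM_def by blast
qed

lemma largeness_UM_if_scott_covers:
  assumes ee: "effective_enum U" and sc: "scott_set (range X)" and "UNIV \<in> UM U X F"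
    and scott_covers: "\<And>(k :: nat) (Y :: nat \<Rightarrow> nat set). (\<Union>j<k. Y j) = UNIV
      \<Longrightarrow> (\<And>j. j < k \<Longrightarrow> Y j \<in> range X)
      \<Longrightarrow> \<exists>j<k. Y j \<in> UM U X F"
  shows "largeness (UM U X F)"
  unfolding largeness_def
proof (intro conjI allI impI)
  show "UM U X F \<noteq> {}" and "upward_closed (UM U X F)"
    using \<open>UNIV \<in> UM U X F\<close> upward_closed_UM[OF ee] by auto
  fix k and Y :: "nat \<Rightarrow> nat set" assume cover: "(\<Union>j<k. Y j) = UNIV"
  show "\<exists>j<k. Y j \<in> UM U X F"
  proof (rule ccontr)
    assume "\<not> (\<exists>j<k. Y j \<in> UM U X F)"
    then have "\<forall>j<k. \<exists>q\<in>F. Y j \<notin> U (X (snd q)) (fst q)"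
      unfolding UM_def by (auto simp: case_prod_beta)
    then obtain q where q: "\<And>j. j < k \<Longrightarrow> q j \<in> F \<and> Y j \<notin> U (X (snd (q j))) (fst (q j))"
      by metis
    have "0 < k" using cover by (cases k) auto
    have "\<And>j. j < k \<Longrightarrow> Y j \<notin> U (X (snd (q j))) (fst (q j))"
      using q by blast
    from scott_set_cover_avoiding[OF ee sc \<open>0 < k\<close> cover this]
    obtain Y' where Y': "\<forall>j<k. Y' j \<in> range X \<and> Y' j \<notin> U (X (snd (q j))) (fst (q j))"
      and cover': "(\<Union>j<k. Y' j) = UNIV"
      by blast
    obtain j where "j < k" "Y' j \<in> UM U X F"
      using scott_covers[OF cover'] Y' by blast
    moreover have "q j \<in> F" using q \<open>j < k\<close> by blast
    ultimately have "Y' j \<in> U (X (snd (q j))) (fst (q j))"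
      unfolding UM_def by (auto simp: case_prod_beta)
    with Y' \<open>j < k\<close> show False by blast
  qed
qed

lemma cohesive_largeness_mem:
  assumes coh: "M_cohesive S A" and large: "largeness (A \<inter> B)" and "Z \<in> S" and "Z \<in> A"
  shows "Z \<in> B"
proof -
  have "Z \<notin> L (- Z)" unfolding L_def by simp
  with coh \<open>Z \<in> S\<close> \<open>Z \<in> A\<close> have "A \<subseteq> L Z"
    unfolding M_cohesive_def by blast
  then have "- Z \<notin> A"
    unfolding L_def by auto
  define Y where "Y = (\<lambda>t :: nat. if t = 0 then Z else - Z)"
  have "Y 0 \<union> Y 1 \<subseteq> (\<Union>j<2. Y j)" by force
  moreover have "Y 0 \<union> Y 1 = UNIV" unfolding Y_def by auto
  ultimately have "(\<Union>j<2. Y j) = UNIV" by blast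
  then obtain j :: nat where "j < 2" "(if j = 0 then Z else - Z) \<in> A \<inter> B"
    using large unfolding largeness_def Y_def by blast
  with \<open>- Z \<notin> A\<close> show ?thesis
    by (auto split: if_splits)
qed

lemma UNIV_mem_largeness:
  assumes "largeness A"
  shows "UNIV \<in> A"
proof -
  have "(\<Union>j<(1::nat). (\<lambda>_. UNIV) j) = (UNIV :: nat set)" by (simp add: lessThan_def)
  then show ?thesis using assms unfolding largeness_def by blast
qed

lemma UM_Un: "UM U X (F \<union> G) = UM U X F \<inter> UM U X G"
  unfolding UM_def by blast

theorem lemma2p9:
  fixes U :: "nat set \<Rightarrow> nat \<Rightarrow> nat set set"
    and X :: "nat \<Rightarrow> nat set"
    and M :: "nat set"
    and C D E :: "(nat \<times> nat) set"
  assumes "effective_enum U"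
    and "scott_set (range X)"
    and "M = coded_by X"
    and "M_cohesive (range X) (UM U X C)"
    and "largeness (UM U X C \<inter> UM U X D)"
    and "largeness (UM U X C \<inter> UM U X E)"
  shows "largeness (UM U X C \<inter> UM U X D \<inter> UM U X E)"
proof -
  have "largeness (UM U X (C \<union> D \<union> E))"
  proof (rule largeness_UM_if_scott_covers[OF assms(1,2)])
    show "UNIV \<in> UM U X (C \<union> D \<union> E)"
      using UNIV_mem_largeness[OF assms(5)] UNIV_mem_largeness[OF assms(6)] by (simp add: UM_Un)
    fix k and Y :: "nat \<Rightarrow> nat set"
    assume cover: "(\<Union>j<k. Y j) = UNIV" and in_M: "\<And>j. j < k \<Longrightarrow> Y j \<in> range X"
    obtain j where "j < k" "Y j \<in> UM U X C \<inter> UM U X D"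
      using assms(5) cover unfolding largeness_def by blast
    then have "Y j \<in> UM U X E"
      using cohesive_largeness_mem[OF assms(4,6) in_M] by blast
    with \<open>j < k\<close> \<open>Y j \<in> UM U X C \<inter> UM U X D\<close> show "\<exists>j<k. Y j \<in> UM U X (C \<union> D \<union> E)"
      by (auto simp: UM_Un)
  qed
  then show ?thesis by (simp add: UM_Un)
qed

end
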